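(* Let $A$ be a finite combinatorial annulus and $r$ a $(b,c)$-strongly bounded refinement. Then there is a constant $k\ge 1$, depending only on $b$ and $c$, such that $\frac1k\mathrm{EEL}(rA)\le\mathrm{EEL}(A)\le k\,\mathrm{EEL}(rA)$.
   Context: Graphs are simple, connected, locally finite. A combinatorial annulus is the 1-skeleton (with its triangular cell structure) of a triangulated topological annulus in the plane, i.e. a region whose boundary is two disjoint Jordan curves, one enclosing the other. An edge path is a sequence of edges $[v_0,v_1],[v_1,v_2],\dots$; $\mathrm{EEL}(A)$ is the extremal length of the family of edge paths connecting the two boundary components of $A$, using metrics on edges: a metric $m:E\to[0,\infty)$ has area $\sum_e m(e)^2$, the length of a path is the sum of $m$ over its edges, and $\mathrm{EEL}=\sup_m (\inf_\gamma L_m(\gamma))^2/\mathrm{area}(m)$ over metrics of finite non-zero area. Refinement: for planar complexes $G=(V,E,F)$ and $rG=(rV,rE,rF)$, $rG$ is a refinement of $G$ if $V\subset rV$ and each edge $e=[x,y]\in E$ corresponds to a path $x=w_0,w_1,\dots,w_n=y$ in $rG$ with $[w_j,w_{j+1}]\in rE$ and $w_j\notin V$ for $0<j<n$ (so new vertices are placed on edges and new edges are added inside faces). Write $\mathrm{vInc}_r(e)=\{w_1,\dots,w_{n-1}\}$, $\mathrm{eInc}_r(e)=\{[w_0,w_1],\dots,[w_{n-1},w_n]\}$, and $\mathrm{eIncAdj}_r(e)=\{[x',y']\in rE: x'\in\mathrm{vInc}_r(e)\cup\{x,y\}$ and $[x',y']$ is contained in a cell of $G$ bounded by $e\}$. $r$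 is $b$-weakly bounded if $|\mathrm{eInc}_r(e)|\le b$ for all $e\in E$, and $(b,c)$-strongly bounded if it is $b$-weakly bounded and, for every $e\in E$ and every vertex $v'$ that is an endpoint of $e$ or lies in $\mathrm{vInc}_r(e)$, $\mathrm{eIncAdj}_r(e)$ contains at most $c$ edges attached to $v'$ lying in any one cell. *)

theory Defs
  imports "HOL-Analysis.Analysis"
begin

text \<open>Planar complexes are given geometrically. Vertices are points of the plane
(complex numbers), an edge is the unordered pair of its endpoints (graphs are simple),
and each edge e is drawn as an arc gam e :: real => complex (an injective path on [0,1])
between its two endpoints.\<close>

definition drawing :: "complex set \<Rightarrow> complex set set \<Rightarrow> (complex set \<Rightarrow> real \<Rightarrow> complex) \<Rightarrow> complex set" where
  "drawing V E gam = V \<union> (\<Union>e\<in>E. path_image (gam e))"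

definition graph_connected :: "complex set \<Rightarrow> complex set set \<Rightarrow> bool" where
  "graph_connected V E \<longleftrightarrow>
     (\<forall>x\<in>V. \<forall>y\<in>V. (x, y) \<in> {(u, v). {u, v} \<in> E}\<^sup>*)"

definition planar_graph :: "complex set \<Rightarrow> complex set set \<Rightarrow> (complex set \<Rightarrow> real \<Rightarrow> complex) \<Rightarrow> bool" where
  "planar_graph V E gam \<longleftrightarrow>
     finite V \<and> V \<noteq> {} \<and>
     (\<forall>e\<in>E. \<exists>x y. e = {x, y} \<and> x \<noteq> y \<and> x \<in> V \<and> y \<in> V \<and>
        arc (gam e) \<and> pathstart (gam e) = x \<and> pathfinish (gam e) = y \<and>
        path_image (gam e) \<inter> V = e) \<and>
     (\<forall>e\<in>E. \<forall>e'\<in>E. e \<noteq> e' \<longrightarrow> path_image (gam e) \<inter> path_image (gam e') \<subseteq> e \<inter> e') \<and>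
     graph_connected V E"

definition jordan_curve :: "(real \<Rightarrow> complex) \<Rightarrow> bool" where
  "jordan_curve J \<longleftrightarrow> simple_path J \<and> pathfinish J = pathstart J"

definition annulus_open :: "(real \<Rightarrow> complex) \<Rightarrow> (real \<Rightarrow> complex) \<Rightarrow> complex set" where
  "annulus_open J1 J2 = inside (path_image J2) \<inter> outside (path_image J1)"

definition annulus_closed :: "(real \<Rightarrow> complex) \<Rightarrow> (real \<Rightarrow> complex) \<Rightarrow> complex set" where
  "annulus_closed J1 J2 = annulus_open J1 J2 \<union> path_image J1 \<union> path_image J2"

definition cells :: "complex set \<Rightarrow> complex set set \<Rightarrow> (complex set \<Rightarrow> real \<Rightarrow> complex)
    \<Rightarrow> (real \<Rightarrow> complex) \<Rightarrow> (real \<Rightarrow> complex) \<Rightarrow> complex set set" where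
  "cells V E gam J1 J2 = components (annulus_open J1 J2 - drawing V E gam)"

definition comb_annulus :: "complex set \<Rightarrow> complex set set \<Rightarrow> (complex set \<Rightarrow> real \<Rightarrow> complex)
    \<Rightarrow> (real \<Rightarrow> complex) \<Rightarrow> (real \<Rightarrow> complex) \<Rightarrow> bool" where
  "comb_annulus V E gam J1 J2 \<longleftrightarrow>
     planar_graph V E gam \<and> jordan_curve J1 \<and> jordan_curve J2 \<and>
     path_image J1 \<subseteq> inside (path_image J2) \<and>
     drawing V E gam \<subseteq> annulus_closed J1 J2 \<and>
     path_image J1 \<union> path_image J2 \<subseteq> drawing V E gam \<and>
     (\<forall>C\<in>cells V E gam J1 J2. \<exists>x y z. x \<noteq> y \<and> y \<noteq> z \<and> x \<noteq> z \<and>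
        {x, y} \<in> E \<and> {y, z} \<in> E \<and> {x, z} \<in> E \<and>
        frontier C = path_image (gam {x, y}) \<union> path_image (gam {y, z}) \<union> path_image (gam {x, z}))"

definition ann_refinement :: "complex set \<Rightarrow> complex set set \<Rightarrow> (complex set \<Rightarrow> real \<Rightarrow> complex)
    \<Rightarrow> (real \<Rightarrow> complex) \<Rightarrow> (real \<Rightarrow> complex)
    \<Rightarrow> complex set \<Rightarrow> complex set set \<Rightarrow> (complex set \<Rightarrow> real \<Rightarrow> complex) \<Rightarrow> bool" where
  "ann_refinement V E gam J1 J2 V' E' gam' \<longleftrightarrow>
     planar_graph V' E' gam' \<and> V \<subseteq> V' \<and>
     V' \<subseteq> V \<union> (\<Union>e\<in>E. path_image (gam e)) \<and>
     (\<forall>e\<in>E. \<exists>x y ws. e = {x, y} \<and> ws \<noteq> [] \<and> hd ws = x \<and> last ws = y \<and>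
        (\<forall>i. Suc i < length ws \<longrightarrow> {ws ! i, ws ! Suc i} \<in> E') \<and>
        (\<forall>i. 0 < i \<and> Suc i < length ws \<longrightarrow> ws ! i \<notin> V) \<and>
        (\<Union>i\<in>{i. Suc i < length ws}. path_image (gam' {ws ! i, ws ! Suc i})) = path_image (gam e)) \<and>
     (\<forall>e'\<in>E'. \<exists>C\<in>cells V E gam J1 J2. path_image (gam' e') \<subseteq> closure C)"

text \<open>vInc, eInc, eIncAdj. The vertices/edges of the path corresponding to e are exactly
the vertices/edges of rA lying on the arc of e.\<close>

definition vInc :: "complex set \<Rightarrow> (complex set \<Rightarrow> real \<Rightarrow> complex) \<Rightarrow> complex set \<Rightarrow> complex set" where
  "vInc V' gam e = (V' \<inter> path_image (gam e)) - e"

definition eInc :: "complex set set \<Rightarrow> (complex set \<Rightarrow> real \<Rightarrow> complex) \<Rightarrow> (complex set \<Rightarrow> real \<Rightarrow> complex)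
    \<Rightarrow> complex set \<Rightarrow> complex set set" where
  "eInc E' gam' gam e = {e' \<in> E'. path_image (gam' e') \<subseteq> path_image (gam e)}"

definition eIncAdj :: "complex set \<Rightarrow> complex set set \<Rightarrow> (complex set \<Rightarrow> real \<Rightarrow> complex)
    \<Rightarrow> (real \<Rightarrow> complex) \<Rightarrow> (real \<Rightarrow> complex)
    \<Rightarrow> complex set \<Rightarrow> complex set set \<Rightarrow> (complex set \<Rightarrow> real \<Rightarrow> complex) \<Rightarrow> complex set \<Rightarrow> complex set set" where
  "eIncAdj V E gam J1 J2 V' E' gam' e =
     {e' \<in> E'. (\<exists>x'\<in>e'. x' \<in> vInc V' gam e \<union> e) \<and>
        (\<exists>C\<in>cells V E gam J1 J2. path_image (gam e) \<subseteq> frontier C \<and> path_image (gam' e') \<subseteq> closure C)}"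

definition weakly_bounded :: "nat \<Rightarrow> complex set set \<Rightarrow> (complex set \<Rightarrow> real \<Rightarrow> complex)
    \<Rightarrow> complex set set \<Rightarrow> (complex set \<Rightarrow> real \<Rightarrow> complex) \<Rightarrow> bool" where
  "weakly_bounded b E gam E' gam' \<longleftrightarrow> (\<forall>e\<in>E. card (eInc E' gam' gam e) \<le> b)"

definition strongly_bounded :: "nat \<Rightarrow> nat \<Rightarrow> complex set \<Rightarrow> complex set set \<Rightarrow> (complex set \<Rightarrow> real \<Rightarrow> complex)
    \<Rightarrow> (real \<Rightarrow> complex) \<Rightarrow> (real \<Rightarrow> complex)
    \<Rightarrow> complex set \<Rightarrow> complex set set \<Rightarrow> (complex set \<Rightarrow> real \<Rightarrow> complex) \<Rightarrow> bool" where
  "strongly_bounded b c V E gam J1 J2 V' E' gam' \<longleftrightarrow>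
     weakly_bounded b E gam E' gam' \<and>
     (\<forall>e\<in>E. \<forall>v'\<in>e \<union> vInc V' gam e. \<forall>C\<in>cells V E gam J1 J2.
        card {e' \<in> eIncAdj V E gam J1 J2 V' E' gam' e. v' \<in> e' \<and> path_image (gam' e') \<subseteq> closure C} \<le> c)"

definition edge_path :: "complex set set \<Rightarrow> complex list \<Rightarrow> bool" where
  "edge_path E ws \<longleftrightarrow> ws \<noteq> [] \<and> (\<forall>i. Suc i < length ws \<longrightarrow> {ws ! i, ws ! Suc i} \<in> E)"

definition path_len :: "(complex set \<Rightarrow> real) \<Rightarrow> complex list \<Rightarrow> real" where
  "path_len m ws = (\<Sum>i<length ws - 1. m {ws ! i, ws ! Suc i})"

definition metric_area :: "complex set set \<Rightarrow> (complex set \<Rightarrow> real) \<Rightarrow> real" where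
  "metric_area E m = (\<Sum>e\<in>E. (m e)\<^sup>2)"

definition EEL :: "complex set set \<Rightarrow> complex set \<Rightarrow> complex set \<Rightarrow> real" where
  "EEL E B1 B2 = Sup {(Inf {path_len m ws | ws. edge_path E ws \<and> hd ws \<in> B1 \<and> last ws \<in> B2})\<^sup>2
                        / metric_area E m | m. (\<forall>e\<in>E. 0 \<le> m e) \<and> 0 < metric_area E m}"

end

theory Submission
  imports Defs "HOL-Complex_Analysis.Complex_Analysis"
begin

text \<open>Both inequalities come from transporting metrics between A and rA. A metric on rA induces
  one on A by giving every edge of A the total weight of the edges of rA subdividing it: by
  Cauchy-Schwarz the area grows at most by the factor b, and every walk of A lifts, through the
  subdividing paths, to a walk of rA that is no longer.

  Conversely, send every new vertex of rA to an end of the edge of A on which it lies. Since each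
  edge of rA lies in a closed triangular cell of A, this maps edges of rA to edges or vertices of A,
  hence walks of rA to walks of A; pulling a metric of A back along this projection makes the
  projected walks no longer, and multiplies the area at most by the number of edges of rA
  projecting onto a single edge xy of A. Such an edge lies in one of the at most two triangles
  at xy (a winding number argument), and is attached to one of the at most 3(2 + 2b) vertices of
  rA on the sides of that triangle, each of which carries at most c of them.\<close>

section \<open>Walks\<close>

fun walk :: "'a set set \<Rightarrow> 'a list \<Rightarrow> bool" where
  "walk S [] = False"
| "walk S [x] = True"
| "walk S (x # y # xs) \<longleftrightarrow> {x, y} \<in> S \<and> walk S (y # xs)"

fun walk_len :: "('a set \<Rightarrow> real) \<Rightarrow> 'a list \<Rightarrow> real" where
  "walk_len m [] = 0"
| "walk_len m [x] = 0"
| "walk_len m (x # y # xs) = m {x, y} + walk_len m (y # xs)"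

fun walk_edges :: "'a list \<Rightarrow> 'a set list" where
  "walk_edges [] = []"
| "walk_edges [x] = []"
| "walk_edges (x # y # xs) = {x, y} # walk_edges (y # xs)"

lemma edge_path_iff_walk: "edge_path S ws \<longleftrightarrow> walk S ws"
proof (induction S ws rule: walk.induct)
  case (3 S x y xs)
  have "(\<forall>i. Suc i < length (x # y # xs) \<longrightarrow> {(x # y # xs) ! i, (x # y # xs) ! Suc i} \<in> S)
     \<longleftrightarrow> {x, y} \<in> S \<and> (\<forall>i. Suc i < length (y # xs) \<longrightarrow> {(y # xs) ! i, (y # xs) ! Suc i} \<in> S)"
    (is "?L \<longleftrightarrow> ?R")
  proof
    assume ?L
    then show ?R
      by (metis Suc_less_eq length_Cons nth_Cons_0 nth_Cons_Suc zero_less_Suc)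
  next
    assume ?R
    then show ?L
      by (metis less_Suc_eq_0_disj length_Cons nth_Cons_0 nth_Cons_Suc Suc_less_eq)
  qed
  then show ?case
    using 3 by (simp add: edge_path_def)
qed (auto simp: edge_path_def)

lemma path_len_eq_walk_len: "path_len m ws = walk_len m ws"
proof (induction m ws rule: walk_len.induct)
  case (3 m x y xs)
  have "path_len m (x # y # xs) = (\<Sum>i<Suc (length xs). m {(x # y # xs) ! i, (x # y # xs) ! Suc i})"
    by (simp add: path_len_def)
  also have "\<dots> = m {x, y} + path_len m (y # xs)"
    by (subst sum.lessThan_Suc_shift) (simp add: path_len_def)
  finally show ?case
    using 3 by simp
qed (auto simp: path_len_def)

lemma walk_len_eq_sum_list: "walk_len m ws = sum_list (map m (walk_edges ws))"
  by (induction m ws rule: walk_len.induct) auto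

lemma set_walk_edges_subset: "walk S ws \<Longrightarrow> set (walk_edges ws) \<subseteq> S"
  by (induction S ws rule: walk.induct) auto

lemma distinct_walk_edges: "distinct ws \<Longrightarrow> distinct (walk_edges ws)"
proof (induction ws rule: walk_edges.induct)
  case (3 x y xs)
  have "\<forall>e\<in>set (walk_edges xs). e \<subseteq> set xs" for xs :: "'a list"
    by (induction xs rule: walk_edges.induct) auto
  then have "{x, y} \<notin> set (walk_edges (y # xs))"
    using "3.prems" by fastforce
  then show ?case
    using 3 by auto
qed auto

lemma walk_mono: "walk S ws \<Longrightarrow> S \<subseteq> T \<Longrightarrow> walk T ws"
  by (induction S ws rule: walk.induct) auto

lemma walk_nonempty_edges: "walk S ws \<Longrightarrow> hd ws \<noteq> last ws \<Longrightarrow> S \<noteq> {}"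
  by (induction S ws rule: walk.induct) auto

lemma walk_append_iff: "walk S (xs @ y # zs) \<longleftrightarrow> walk S (xs @ [y]) \<and> walk S (y # zs)"
  by (induction xs rule: induct_list012) auto

lemma walk_len_append: "walk_len m (xs @ y # zs) = walk_len m (xs @ [y]) + walk_len m (y # zs)"
  by (induction xs rule: induct_list012) auto

lemma walk_rev: "walk S ws \<Longrightarrow> walk S (rev ws)"
proof (induction S ws rule: walk.induct)
  case (3 S x y xs)
  then show ?case
    using walk_append_iff[of S "rev xs" y "[x]"] by (simp add: insert_commute)
qed auto

lemma walk_join:
  assumes "walk S xs" "walk S ys" "last xs = hd ys"
  shows "walk S (xs @ tl ys)" "walk_len m (xs @ tl ys) = walk_len m xs + walk_len m ys"
    "hd (xs @ tl ys) = hd xs" "last (xs @ tl ys) = last ys"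
proof -
  have xs: "butlast xs @ [hd ys] = xs"
    using assms(1,3) by (cases xs rule: rev_cases) auto
  have ys: "hd ys # tl ys = ys"
    using assms(2) by (cases ys) auto
  have xs_ys: "xs @ tl ys = butlast xs @ hd ys # tl ys"
    by (subst (1) xs[symmetric]) simp
  show "walk S (xs @ tl ys)"
    unfolding xs_ys using assms(1,2) by (intro walk_append_iff[THEN iffD2]) (simp add: xs ys)
  show "walk_len m (xs @ tl ys) = walk_len m xs + walk_len m ys"
    unfolding xs_ys walk_len_append[of m "butlast xs" "hd ys" "tl ys"] by (simp only: xs ys)
  show "hd (xs @ tl ys) = hd xs"
    using assms(1) by (cases xs) auto
  show "last (xs @ tl ys) = last ys"
    unfolding xs_ys using assms(2) by (cases ys) auto
qed

lemma walk_shortcut: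
  assumes "walk S ws"
  obtains ws' where "walk S ws'" "distinct ws'" "hd ws' = hd ws" "last ws' = last ws"
proof -
  have "\<exists>ws'. walk S ws' \<and> distinct ws' \<and> hd ws' = hd ws \<and> last ws' = last ws"
    using assms
  proof (induction "length ws" arbitrary: ws rule: less_induct)
    case less
    show ?case
    proof (cases "distinct ws")
      case False
      then obtain xs y ys zs where ws: "ws = xs @ [y] @ ys @ [y] @ zs"
        using not_distinct_decomp by blast
      have w: "walk S (xs @ y # ys @ y # zs)"
        using less.prems ws by simp
      have "walk S (xs @ [y])"
        using w walk_append_iff[of S xs y "ys @ y # zs"] by blast
      moreover have "walk S (y # zs)"
        using w walk_append_iff[of S "xs @ y # ys" y zs] by simp
      ultimately have "walk S (xs @ y # zs)"
        using walk_append_iff[of S xs y zs] by blast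
      moreover have "length (xs @ y # zs) < length ws"
        using ws by simp
      ultimately obtain ws' where ws': "walk S ws'" "distinct ws'"
          "hd ws' = hd (xs @ y # zs)" "last ws' = last (xs @ y # zs)"
        using less.hyps by blast
      moreover have "hd (xs @ y # zs) = hd ws"
        using ws by (cases xs) auto
      moreover have "last (xs @ y # zs) = last ws"
        using ws by (cases zs) auto
      ultimately show ?thesis
        by metis
    qed (use less.prems in blast)
  qed
  then show thesis
    using that by blast
qed

lemma rtrancl_imp_walk:
  assumes "(a, b) \<in> {(u, v). {u, v} \<in> S}\<^sup>*"
  shows "\<exists>ws. walk S ws \<and> hd ws = a \<and> last ws = b"
  using assms
proof (induction rule: rtrancl_induct)
  case base
  show ?case
    by (rule exI[of _ "[a]"]) simp
next
  case (step y z)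
  then obtain ws where ws: "walk S ws" "hd ws = a" "last ws = y"
    by blast
  have yz: "walk S [y, z]"
    using step.hyps(2) by simp
  show ?case
    using walk_join[OF ws(1) yz] ws by (intro exI[of _ "ws @ [z]"]) simp
qed

lemma walk_len_nonneg: "walk S ws \<Longrightarrow> \<forall>e\<in>S. 0 \<le> m e \<Longrightarrow> 0 \<le> walk_len m ws"
  by (induction S ws rule: walk.induct) auto

lemma walk_len_eq_0: "walk S ws \<Longrightarrow> \<forall>e\<in>S. m e = 0 \<Longrightarrow> walk_len m ws = 0"
  by (induction S ws rule: walk.induct) auto

lemma walk_len_le_length_mult:
  "walk S ws \<Longrightarrow> \<forall>e\<in>S. m e \<le> M \<Longrightarrow> 0 \<le> M \<Longrightarrow> walk_len m ws \<le> real (length ws) * M"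
  by (induction S ws rule: walk.induct) (auto simp: algebra_simps)

lemma distinct_walk_len_le_sum:
  assumes "walk S ws" "distinct ws" "finite S" "\<forall>e\<in>S. 0 \<le> m e"
  shows "walk_len m ws \<le> sum m S"
proof -
  have "walk_len m ws = sum m (set (walk_edges ws))"
    using distinct_walk_edges[OF assms(2)] by (simp add: walk_len_eq_sum_list sum_list_distinct_conv_sum_set)
  also have "\<dots> \<le> sum m S"
    using set_walk_edges_subset[OF assms(1)] assms by (intro sum_mono2) auto
  finally show ?thesis .
qed

fun proj_walk :: "('a \<Rightarrow> 'b) \<Rightarrow> 'a list \<Rightarrow> 'b list" where
  "proj_walk f [] = []"
| "proj_walk f [x] = [f x]"
| "proj_walk f (x # y # xs) = (if f x = f y then proj_walk f (y # xs) else f x # proj_walk f (y # xs))"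

lemma proj_walk_Cons: "\<exists>rest. proj_walk f (x # xs) = f x # rest"
  by (induction f "x # xs" arbitrary: x xs rule: proj_walk.induct) auto

lemma hd_proj_walk: "ws \<noteq> [] \<Longrightarrow> hd (proj_walk f ws) = f (hd ws)"
  using proj_walk_Cons[of f "hd ws" "tl ws"] by auto

lemma last_proj_walk: "ws \<noteq> [] \<Longrightarrow> last (proj_walk f ws) = f (last ws)"
proof (induction f ws rule: proj_walk.induct)
  case (3 f x y xs)
  have "proj_walk f (y # xs) \<noteq> []"
    using proj_walk_Cons[of f y xs] by auto
  then show ?case
    using 3 by auto
qed auto

lemma walk_proj_walk:
  assumes "walk S ws" "\<And>u v. {u, v} \<in> S \<Longrightarrow> f u \<noteq> f v \<Longrightarrow> {f u, f v} \<in> T"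
  shows "walk T (proj_walk f ws)"
  using assms
proof (induction S ws rule: walk.induct)
  case (3 S x y xs)
  obtain rest where "proj_walk f (y # xs) = f y # rest"
    using proj_walk_Cons[of f y xs] by blast
  with 3 show ?case
    by auto
qed auto

lemma walk_len_proj_walk_le:
  assumes "walk S ws" "\<forall>e\<in>S. 0 \<le> m' e"
    and "\<And>u v. {u, v} \<in> S \<Longrightarrow> f u \<noteq> f v \<Longrightarrow> m {f u, f v} \<le> m' {u, v}"
  shows "walk_len m (proj_walk f ws) \<le> walk_len m' ws"
  using assms
proof (induction S ws rule: walk.induct)
  case (3 S x y xs)
  obtain rest where "proj_walk f (y # xs) = f y # rest"
    using proj_walk_Cons[of f y xs] by blast
  with 3 show ?case
    by (auto intro: add_mono add_increasing)
qed auto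

section \<open>Edge extremal length\<close>

definition crossing_walks :: "complex set set \<Rightarrow> complex set \<Rightarrow> complex set \<Rightarrow> complex list set" where
  "crossing_walks E B1 B2 = {ws. walk E ws \<and> hd ws \<in> B1 \<and> last ws \<in> B2}"

definition crossing_len :: "complex set set \<Rightarrow> complex set \<Rightarrow> complex set \<Rightarrow> (complex set \<Rightarrow> real) \<Rightarrow> real" where
  "crossing_len E B1 B2 m = Inf (walk_len m ` crossing_walks E B1 B2)"

definition admissible :: "complex set set \<Rightarrow> (complex set \<Rightarrow> real) \<Rightarrow> bool" where
  "admissible E m \<longleftrightarrow> (\<forall>e\<in>E. 0 \<le> m e) \<and> 0 < metric_area E m"

definition EEL_ratio :: "complex set set \<Rightarrow> complex set \<Rightarrow> complex set \<Rightarrow> (complex set \<Rightarrow> real) \<Rightarrow> real" where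
  "EEL_ratio E B1 B2 m = (crossing_len E B1 B2 m)\<^sup>2 / metric_area E m"

lemma EEL_eq_Sup_ratio: "EEL E B1 B2 = Sup (EEL_ratio E B1 B2 ` {m. admissible E m})"
proof -
  have "{path_len m ws | ws. edge_path E ws \<and> hd ws \<in> B1 \<and> last ws \<in> B2} = walk_len m ` crossing_walks E B1 B2"
    for m
    by (auto simp: crossing_walks_def edge_path_iff_walk path_len_eq_walk_len)
  then show ?thesis
    unfolding EEL_def EEL_ratio_def crossing_len_def admissible_def setcompr_eq_image by simp
qed

lemma metric_area_nonneg: "0 \<le> metric_area E m"
  unfolding metric_area_def by (simp add: sum_nonneg)

lemma metric_area_eq_0:
  assumes "finite E" "metric_area E m = 0" "e \<in> E"
  shows "m e = 0"
  using assms sum_nonneg_eq_0_iff[of E "\<lambda>e. (m e)\<^sup>2"] unfolding metric_area_def by simp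

lemma edge_le_sqrt_metric_area:
  assumes "finite E" "e \<in> E" "0 \<le> m e"
  shows "m e \<le> sqrt (metric_area E m)"
proof -
  have "(m e)\<^sup>2 \<le> metric_area E m"
    unfolding metric_area_def using assms by (intro member_le_sum) auto
  then show ?thesis
    using assms(3) by (simp add: real_le_rsqrt)
qed

lemma crossing_len_le:
  "ws \<in> crossing_walks E B1 B2 \<Longrightarrow> \<forall>e\<in>E. 0 \<le> m e \<Longrightarrow> crossing_len E B1 B2 m \<le> walk_len m ws"
  unfolding crossing_len_def
  by (rule cInf_lower) (auto simp: crossing_walks_def intro!: bdd_belowI[of _ 0] walk_len_nonneg)

lemma le_crossing_len:
  "crossing_walks E B1 B2 \<noteq> {} \<Longrightarrow> (\<And>ws. ws \<in> crossing_walks E B1 B2 \<Longrightarrow> c \<le> walk_len m ws)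
    \<Longrightarrow> c \<le> crossing_len E B1 B2 m"
  unfolding crossing_len_def by (rule cInf_greatest) auto

lemma crossing_len_nonneg:
  "crossing_walks E B1 B2 \<noteq> {} \<Longrightarrow> \<forall>e\<in>E. 0 \<le> m e \<Longrightarrow> 0 \<le> crossing_len E B1 B2 m"
  by (rule le_crossing_len) (auto simp: crossing_walks_def intro: walk_len_nonneg)

lemma EEL_ratio_le_square_length:
  assumes "finite E" "ws \<in> crossing_walks E B1 B2" "admissible E m"
  shows "EEL_ratio E B1 B2 m \<le> (length ws)\<^sup>2"
proof -
  have nonneg: "\<forall>e\<in>E. 0 \<le> m e" and pos: "0 < metric_area E m"
    using assms(3) by (auto simp: admissible_def)
  have "walk E ws"
    using assms(2) by (simp add: crossing_walks_def)
  moreover have "\<forall>e\<in>E. m e \<le> sqrt (metric_area E m)"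
    using assms(1) nonneg edge_le_sqrt_metric_area by blast
  ultimately have "walk_len m ws \<le> length ws * sqrt (metric_area E m)"
    by (rule walk_len_le_length_mult) (simp add: metric_area_nonneg)
  then have "crossing_len E B1 B2 m \<le> length ws * sqrt (metric_area E m)"
    using crossing_len_le[OF assms(2) nonneg] by linarith
  moreover have "0 \<le> crossing_len E B1 B2 m"
    using crossing_len_nonneg assms(2) nonneg by blast
  ultimately have "(crossing_len E B1 B2 m)\<^sup>2 \<le> (length ws * sqrt (metric_area E m))\<^sup>2"
    by (intro power_mono) auto
  also have "\<dots> = (length ws)\<^sup>2 * metric_area E m"
    using pos by (simp add: power_mult_distrib)
  finally show ?thesis
    unfolding EEL_ratio_def using pos by (simp add: divide_le_eq)
qed

lemma EEL_ratio_le_EEL: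
  assumes "finite E" "crossing_walks E B1 B2 \<noteq> {}" "admissible E m"
  shows "EEL_ratio E B1 B2 m \<le> EEL E B1 B2"
proof -
  obtain ws where "ws \<in> crossing_walks E B1 B2"
    using assms(2) by blast
  then have "bdd_above (EEL_ratio E B1 B2 ` {m. admissible E m})"
    using EEL_ratio_le_square_length[OF assms(1)] by (intro bdd_aboveI2) blast
  then show ?thesis
    unfolding EEL_eq_Sup_ratio using assms(3) by (intro cSup_upper) auto
qed

lemma admissible_const_1: "finite E \<Longrightarrow> E \<noteq> {} \<Longrightarrow> admissible E (\<lambda>_. 1)"
  unfolding admissible_def metric_area_def by (simp add: card_gt_0_iff)

lemma EEL_nonneg:
  assumes "finite E" "E \<noteq> {}" "crossing_walks E B1 B2 \<noteq> {}"
  shows "0 \<le> EEL E B1 B2"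
  using EEL_ratio_le_EEL[OF assms(1,3) admissible_const_1[OF assms(1,2)]]
  unfolding EEL_ratio_def by (smt (verit) metric_area_nonneg divide_nonneg_nonneg zero_le_power2)

lemma EEL_le:
  assumes "finite E" "E \<noteq> {}" "\<And>m. admissible E m \<Longrightarrow> EEL_ratio E B1 B2 m \<le> c"
  shows "EEL E B1 B2 \<le> c"
  unfolding EEL_eq_Sup_ratio using admissible_const_1[OF assms(1,2)] assms(3) by (intro cSup_least) auto

lemma EEL_ratio_le_by_transfer:
  assumes T: "finite T" "T \<noteq> {}" "crossing_walks T B1 B2 \<noteq> {}"
    and S: "crossing_walks S A1 A2 \<noteq> {}" "admissible S ms"
    and mt: "\<forall>e\<in>T. 0 \<le> mt e" "metric_area T mt \<le> K * metric_area S ms"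
      "crossing_len S A1 A2 ms \<le> crossing_len T B1 B2 mt"
    and K: "0 \<le> K"
  shows "EEL_ratio S A1 A2 ms \<le> K * EEL T B1 B2"
proof -
  have S_pos: "0 < metric_area S ms" and S_nonneg: "\<forall>e\<in>S. 0 \<le> ms e"
    using S(2) by (auto simp: admissible_def)
  have len_S: "0 \<le> crossing_len S A1 A2 ms"
    using crossing_len_nonneg S(1) S_nonneg by blast
  have EEL_T: "0 \<le> EEL T B1 B2"
    using EEL_nonneg T by blast
  show ?thesis
  proof (cases "metric_area T mt = 0")
    case True
    then have "\<forall>e\<in>T. mt e = 0"
      using metric_area_eq_0 T(1) by blast
    moreover obtain ws where ws: "ws \<in> crossing_walks T B1 B2"
      using T(3) by blast
    ultimately have "crossing_len T B1 B2 mt \<le> 0"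
      using crossing_len_le[OF ws mt(1)] walk_len_eq_0[of T ws mt] by (auto simp: crossing_walks_def)
    then have "EEL_ratio S A1 A2 ms = 0"
      using mt(3) len_S by (simp add: EEL_ratio_def)
    then show ?thesis
      using EEL_T K by simp
  next
    case False
    then have T_pos: "0 < metric_area T mt"
      using metric_area_nonneg[of T mt] by linarith
    then have K_pos: "0 < K"
      using mt(2) S_pos by (smt (verit) mult_nonpos_nonneg)
    have "EEL_ratio S A1 A2 ms \<le> (crossing_len T B1 B2 mt)\<^sup>2 / metric_area S ms"
      unfolding EEL_ratio_def using S_pos mt(3) len_S by (intro divide_right_mono power_mono) auto
    also have "\<dots> \<le> (crossing_len T B1 B2 mt)\<^sup>2 / (metric_area T mt / K)"
      using mt(2) K_pos T_pos S_pos by (intro divide_left_mono) (auto simp: field_simps)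
    also have "\<dots> = K * EEL_ratio T B1 B2 mt"
      using K_pos by (simp add: EEL_ratio_def field_simps)
    also have "\<dots> \<le> K * EEL T B1 B2"
      using EEL_ratio_le_EEL[OF T(1,3)] mt(1) T_pos K by (intro mult_left_mono) (simp_all add: admissible_def)
    finally show ?thesis .
  qed
qed

lemma EEL_le_by_transfer:
  assumes "finite S" "S \<noteq> {}" "crossing_walks S A1 A2 \<noteq> {}"
    and "finite T" "T \<noteq> {}" "crossing_walks T B1 B2 \<noteq> {}" and "0 \<le> K"
    and transfer: "\<And>ms. admissible S ms \<Longrightarrow> \<exists>mt. (\<forall>e\<in>T. 0 \<le> mt e) \<and>
      metric_area T mt \<le> K * metric_area S ms \<and> crossing_len S A1 A2 ms \<le> crossing_len T B1 B2 mt"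
  shows "EEL S A1 A2 \<le> K * EEL T B1 B2"
proof (rule EEL_le[OF assms(1,2)])
  fix ms
  assume ms: "admissible S ms"
  then obtain mt where "\<forall>e\<in>T. 0 \<le> mt e" "metric_area T mt \<le> K * metric_area S ms"
    "crossing_len S A1 A2 ms \<le> crossing_len T B1 B2 mt"
    using transfer by blast
  then show "EEL_ratio S A1 A2 ms \<le> K * EEL T B1 B2"
    using EEL_ratio_le_by_transfer assms ms by blast
qed

lemma metric_area_push_le:
  assumes "finite E" "finite E'" "\<And>e. e \<in> E \<Longrightarrow> P e \<subseteq> E'" "disjoint_family_on P E"
    and "\<And>e. e \<in> E \<Longrightarrow> card (P e) \<le> b"
  shows "metric_area E (\<lambda>e. sum m' (P e)) \<le> b * metric_area E' m'"
proof -
  have fin: "finite (P e)" if "e \<in> E" for e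
    using assms(2,3) that finite_subset by blast
  have "metric_area E (\<lambda>e. sum m' (P e)) \<le> (\<Sum>e\<in>E. b * (\<Sum>e'\<in>P e. (m' e')\<^sup>2))"
    unfolding metric_area_def
  proof (rule sum_mono)
    fix e
    assume e: "e \<in> E"
    have "(sum m' (P e))\<^sup>2 \<le> (\<Sum>e'\<in>P e. (m' e')\<^sup>2) * card (P e)"
      by (rule sum_squared_le_sum_of_squares)
    also have "\<dots> \<le> b * (\<Sum>e'\<in>P e. (m' e')\<^sup>2)"
      using assms(5)[OF e] by (simp add: mult.commute mult_right_mono sum_nonneg)
    finally show "(sum m' (P e))\<^sup>2 \<le> b * (\<Sum>e'\<in>P e. (m' e')\<^sup>2)" .
  qed
  also have "\<dots> = b * (\<Sum>e'\<in>(\<Union>e\<in>E. P e). (m' e')\<^sup>2)"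
    using assms(1,4) fin by (simp add: sum_distrib_left sum.UNION_disjoint_family)
  also have "\<dots> \<le> b * metric_area E' m'"
    unfolding metric_area_def using assms(2,3) by (intro mult_left_mono sum_mono2) auto
  finally show ?thesis .
qed

lemma metric_area_pull_le:
  assumes "finite E" "finite E'" "\<And>F. F \<in> E \<Longrightarrow> card {e' \<in> E'. p e' = F} \<le> K"
  shows "metric_area E' (\<lambda>e'. if p e' \<in> E then m (p e') else 0) \<le> K * metric_area E m"
proof -
  have "metric_area E' (\<lambda>e'. if p e' \<in> E then m (p e') else 0)
      = (\<Sum>e'\<in>E'. \<Sum>F\<in>E. if p e' = F then (m F)\<^sup>2 else 0)"
    unfolding metric_area_def using assms(1) by (intro sum.cong) (auto simp: sum.delta)
  also have "\<dots> = (\<Sum>F\<in>E. card {e' \<in> E'. p e' = F} * (m F)\<^sup>2)"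
    using assms(2) by (subst sum.swap) (simp add: sum.inter_filter[symmetric])
  also have "\<dots> \<le> (\<Sum>F\<in>E. K * (m F)\<^sup>2)"
    using assms(3) by (intro sum_mono mult_right_mono) auto
  also have "\<dots> = K * metric_area E m"
    by (simp add: metric_area_def sum_distrib_left)
  finally show ?thesis .
qed

lemma connected_simple_loop_minus_point:
  assumes "simple_path J" "pathfinish J = pathstart J"
  shows "connected (path_image J - {a})"
proof (cases "a \<in> path_image J")
  case True
  then obtain t where t: "t \<in> {0..1}" "J t = a"
    by (auto simp: path_image_def)
  have "simple_path (shiftpath t J)"
    using simple_path_shiftpath assms t by auto
  from connected_simple_path_endless[OF this] show ?thesis
    using assms t by (simp add: path_image_shiftpath pathstart_shiftpath pathfinish_shiftpath)
qed (simp add: connected_simple_path_image assms)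

text \<open>Transported into the interval by the inverse of the arc, the loop minus a suitable point
  would be a connected set of reals missing a point strictly between two of its elements.\<close>

lemma simple_loop_not_subset_arc:
  fixes g J :: "real \<Rightarrow> 'a::t2_space"
  assumes g: "arc g" and J: "simple_path J" "pathfinish J = pathstart J"
  shows "\<not> path_image J \<subseteq> path_image g"
proof
  assume sub: "path_image J \<subseteq> path_image g"
  obtain h where hom: "homeomorphism {0..1} (path_image g) g h"
    using homeomorphism_arc[OF g] by blast
  have inj: "inj_on h (path_image g)"
    by (rule inj_on_inverseI[where g = g]) (use hom in \<open>simp add: homeomorphism_apply2\<close>)
  have cont: "continuous_on (path_image J) h"
    using continuous_on_subset[OF homeomorphism_cont2[OF hom] sub] .
  define S where "S = h ` path_image J"
  have "J 0 \<noteq> J (1/2)"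
    using J(1) by (fastforce simp add: simple_path_def loop_free_def)
  moreover have "J 0 \<in> path_image J" "J (1/2) \<in> path_image J"
    by (auto simp: path_image_def)
  ultimately have "h (J 0) \<noteq> h (J (1/2))" "h (J 0) \<in> S" "h (J (1/2)) \<in> S"
    using inj sub unfolding S_def by (auto dest: inj_onD)
  then obtain lo hi where lohi: "lo \<in> S" "hi \<in> S" "lo < hi"
    by (metis linorder_neqE)
  define mid where "mid = (lo + hi) / 2"
  have mid: "lo < mid" "mid < hi"
    using lohi(3) unfolding mid_def by auto
  have "connected S"
    unfolding S_def by (rule connected_continuous_image[OF cont connected_simple_path_image[OF J(1)]])
  then have "mid \<in> S"
    using connected_contains_Icc[of S lo hi] lohi mid by auto
  then obtain p where p: "p \<in> path_image J" "h p = mid"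
    unfolding S_def by blast
  have "h ` (path_image J - {p}) = S - {mid}"
    using inj_on_image_set_diff[OF inj, of "path_image J" "{p}"] sub p unfolding S_def by auto
  moreover have "connected (h ` (path_image J - {p}))"
    using connected_simple_loop_minus_point[OF J] continuous_on_subset[OF cont]
    by (rule connected_continuous_image[rotated]) auto
  ultimately have "{lo..hi} \<subseteq> S - {mid}"
    using connected_contains_Icc[of "S - {mid}" lo hi] lohi mid by auto
  moreover have "mid \<in> {lo..hi}"
    using mid by simp
  ultimately show False
    by blast
qed

lemma connected_eq_if_clopen_subset:
  fixes U C :: "'a::topological_space set"
  assumes "connected U" "open C" "C \<subseteq> U" "C \<noteq> {}" "closure C \<inter> U \<subseteq> C"
  shows "C = U"
proof -
  have "openin (top_of_set U) (U \<inter> C)"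
    using assms(2) by (rule openin_open_Int)
  moreover have "U \<inter> C = C"
    using assms(3) by blast
  ultimately have "openin (top_of_set U) C"
    by simp
  moreover have "closedin (top_of_set U) C"
    unfolding closedin_closed using assms(3,5) closure_subset by (intro exI[of _ "closure C"]) auto
  ultimately show ?thesis
    using assms(1,4) unfolding connected_clopen by blast
qed

section \<open>Plane graphs\<close>

definition edge_arc :: "(complex set \<Rightarrow> real \<Rightarrow> complex) \<Rightarrow> complex \<Rightarrow> complex \<Rightarrow> real \<Rightarrow> complex" where
  "edge_arc gam u v = (if pathstart (gam {u, v}) = u then gam {u, v} else reversepath (gam {u, v}))"

definition arc_via :: "(complex set \<Rightarrow> real \<Rightarrow> complex) \<Rightarrow> complex \<Rightarrow> complex \<Rightarrow> complex \<Rightarrow> real \<Rightarrow> complex" where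
  "arc_via gam x z y = edge_arc gam x z +++ edge_arc gam z y"

definition triangle_loop :: "(complex set \<Rightarrow> real \<Rightarrow> complex) \<Rightarrow> complex \<Rightarrow> complex \<Rightarrow> complex \<Rightarrow> real \<Rightarrow> complex" where
  "triangle_loop gam x y z = arc_via gam x z y +++ edge_arc gam y x"

locale plane_graph =
  fixes V :: "complex set" and E :: "complex set set" and gam :: "complex set \<Rightarrow> real \<Rightarrow> complex"
  assumes planar: "planar_graph V E gam"
begin

lemma edgeE:
  assumes "e \<in> E"
  obtains x y where "e = {x, y}" "x \<noteq> y" "x \<in> V" "y \<in> V" "arc (gam e)"
    "pathstart (gam e) = x" "pathfinish (gam e) = y" "path_image (gam e) \<inter> V = e"
proof -
  have "\<forall>e\<in>E. \<exists>x y. e = {x, y} \<and> x \<noteq> y \<and> x \<in> V \<and> y \<in> V \<and> arc (gam e) \<and>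
      pathstart (gam e) = x \<and> pathfinish (gam e) = y \<and> path_image (gam e) \<inter> V = e"
    using planar unfolding planar_graph_def by (elim conjE)
  then have "\<exists>x y. e = {x, y} \<and> x \<noteq> y \<and> x \<in> V \<and> y \<in> V \<and> arc (gam e) \<and>
      pathstart (gam e) = x \<and> pathfinish (gam e) = y \<and> path_image (gam e) \<inter> V = e"
    using assms by (rule bspec)
  then show thesis
    using that by blast
qed

lemma arcs_meet_in_common_ends:
  assumes "e \<in> E" "e' \<in> E" "e \<noteq> e'"
  shows "path_image (gam e) \<inter> path_image (gam e') \<subseteq> e \<inter> e'"
proof -
  have "\<forall>e\<in>E. \<forall>e'\<in>E. e \<noteq> e' \<longrightarrow> path_image (gam e) \<inter> path_image (gam e') \<subseteq> e \<inter> e'"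
    using planar unfolding planar_graph_def by (elim conjE)
  with assms show ?thesis
    by blast
qed

lemma finite_vertices: "finite V"
  using planar by (simp add: planar_graph_def)

lemma arc_edge: "e \<in> E \<Longrightarrow> arc (gam e)"
  by (erule edgeE)

lemma arc_inter_vertices: "e \<in> E \<Longrightarrow> path_image (gam e) \<inter> V = e"
  by (erule edgeE)

lemma edge_subset_vertices: "e \<in> E \<Longrightarrow> e \<subseteq> V"
  using arc_inter_vertices by blast

lemma edge_subset_arc: "e \<in> E \<Longrightarrow> e \<subseteq> path_image (gam e)"
  using arc_inter_vertices by blast

lemma finite_edges: "finite E"
  using finite_subset[of E "Pow V"] edge_subset_vertices finite_vertices by blast

lemma card_edge: "e \<in> E \<Longrightarrow> card e = 2"
  by (erule edgeE) simp

lemma edge_eq_if_arcs_share_inner_point: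
  assumes "e \<in> E" "e' \<in> E" "p \<in> path_image (gam e)" "p \<in> path_image (gam e')" "p \<notin> V"
  shows "e = e'"
  using arcs_meet_in_common_ends[OF assms(1,2)] edge_subset_vertices[OF assms(1)] assms(3-5) by blast

lemma arc_inner_point:
  assumes "e \<in> E"
  obtains p where "p \<in> path_image (gam e)" "p \<notin> V"
proof -
  have "uncountable (path_image (gam e) - V)"
    using arc_image_uncountable[OF arc_edge[OF assms]] finite_vertices
    by (simp add: countable_finite uncountable_minus_countable)
  then have "path_image (gam e) - V \<noteq> {}"
    by (metis countable_empty)
  then show thesis
    using that by blast
qed

lemma closed_partial_drawing:
  assumes "F \<subseteq> E"
  shows "closed (V \<union> (\<Union>e\<in>F. path_image (gam e)))"
proof -
  have "finite F"
    using finite_subset[OF assms finite_edges] .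
  moreover have "closed (path_image (gam e))" if "e \<in> F" for e
    using that assms arc_edge by (simp add: arc_imp_path closed_path_image subset_iff)
  ultimately show ?thesis
    using finite_vertices by (intro closed_Un closed_UN finite_imp_closed) auto
qed

lemma closed_drawing: "closed (drawing V E gam)"
  unfolding drawing_def by (rule closed_partial_drawing) simp

lemma arc_subset_drawing: "e \<in> E \<Longrightarrow> path_image (gam e) \<subseteq> drawing V E gam"
  unfolding drawing_def by blast

lemma walk_between_vertices:
  assumes "x \<in> V" "y \<in> V"
  obtains ws where "walk E ws" "hd ws = x" "last ws = y"
proof -
  have "graph_connected V E"
    using planar by (simp add: planar_graph_def)
  then have "(x, y) \<in> {(u, v). {u, v} \<in> E}\<^sup>*"
    using assms unfolding graph_connected_def by simp
  from rtrancl_imp_walk[OF this] that show thesis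
    by blast
qed

text \<open>If y is not on J, the connected set J - {x} is covered by the two disjoint relatively
  closed sets it cuts out of the arc of xy and of the rest of the drawing; since it meets the arc,
  it lies in the arc, and then so does all of J.\<close>

lemma jordan_curve_through_edge_contains_end:
  assumes J: "simple_path J" "pathfinish J = pathstart J" "path_image J \<subseteq> drawing V E gam"
    and e: "{x, y} \<in> E" and v: "v \<in> path_image J" "v \<in> path_image (gam {x, y})" "v \<notin> V"
  shows "y \<in> path_image J"
proof (rule ccontr)
  assume y: "y \<notin> path_image J"
  define T where "T = path_image J - {x}"
  define A where "A = path_image (gam {x, y})"
  define D where "D = V \<union> (\<Union>h\<in>E - {{x, y}}. path_image (gam h))"
  have "closed A"
    unfolding A_def using arc_edge[OF e] by (simp add: arc_imp_path closed_path_image)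
  moreover have "closed D"
    unfolding D_def by (rule closed_partial_drawing) blast
  moreover have "T \<subseteq> A \<union> D"
    using J(3) unfolding T_def A_def D_def drawing_def by blast
  moreover have "A \<inter> D \<inter> T = {}"
  proof -
    have "A \<inter> V = {x, y}"
      unfolding A_def using arc_inter_vertices[OF e] .
    moreover have "A \<inter> path_image (gam h) \<subseteq> {x, y}" if "h \<in> E - {{x, y}}" for h
      using arcs_meet_in_common_ends[OF e, of h] that unfolding A_def by blast
    ultimately show ?thesis
      using y unfolding T_def D_def by blast
  qed
  moreover have "A \<inter> T \<noteq> {}"
    using v edge_subset_vertices[OF e] unfolding A_def T_def by blast
  moreover have "connected T"
    unfolding T_def by (rule connected_simple_loop_minus_point[OF J(1,2)])
  ultimately have "T \<subseteq> A"
    using connected_closed[of T] by blast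
  moreover have "x \<in> A"
    using edge_subset_arc[OF e] unfolding A_def by blast
  ultimately have "path_image J \<subseteq> A"
    unfolding T_def by blast
  then show False
    using simple_loop_not_subset_arc[OF arc_edge[OF e] J(1,2)] unfolding A_def by blast
qed

lemma jordan_curve_through_edge_contains_ends:
  assumes "simple_path J" "pathfinish J = pathstart J" "path_image J \<subseteq> drawing V E gam"
    and "e \<in> E" "v \<in> path_image J" "v \<in> path_image (gam e)" "v \<notin> V"
  shows "e \<subseteq> path_image J"
proof -
  obtain x y where e: "e = {x, y}"
    by (rule edgeE[OF assms(4)])
  then have "{y, x} \<in> E" "gam {y, x} = gam e"
    using assms(4) by (simp_all add: insert_commute)
  then show ?thesis
    using jordan_curve_through_edge_contains_end[OF assms(1-3), of x y v]
      jordan_curve_through_edge_contains_end[OF assms(1-3), of y x v] assms(4-7) e by auto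
qed

lemma jordan_curve_meets_vertices:
  assumes "simple_path J" "pathfinish J = pathstart J" "path_image J \<subseteq> drawing V E gam"
  shows "V \<inter> path_image J \<noteq> {}"
proof -
  obtain p where p: "p \<in> path_image J"
    using path_image_nonempty by blast
  show ?thesis
  proof (cases "p \<in> V")
    case False
    then obtain e where e: "e \<in> E" "p \<in> path_image (gam e)"
      using p assms(3) unfolding drawing_def by blast
    then have "e \<subseteq> path_image J"
      using jordan_curve_through_edge_contains_ends[OF assms] p False by blast
    moreover have "e \<subseteq> V" "e \<noteq> {}"
      using edge_subset_vertices[OF e(1)] card_edge[OF e(1)] by auto
    ultimately show ?thesis
      by blast
  qed (use p in blast)
qed

lemma edge_arc:
  assumes "{u, v} \<in> E"
  shows "arc (edge_arc gam u v)" "pathstart (edge_arc gam u v) = u" "pathfinish (edge_arc gam u v) = v"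
    "path_image (edge_arc gam u v) = path_image (gam {u, v})"
proof -
  obtain a b where ab: "{u, v} = {a, b}" "a \<noteq> b" "a \<in> V" "b \<in> V" "arc (gam {u, v})"
    "pathstart (gam {u, v}) = a" "pathfinish (gam {u, v}) = b" "path_image (gam {u, v}) \<inter> V = {u, v}"
    by (rule edgeE[OF assms])
  then consider "a = u" "b = v" | "a = v" "b = u"
    by (auto simp: doubleton_eq_iff)
  then have "arc (edge_arc gam u v) \<and> pathstart (edge_arc gam u v) = u \<and>
      pathfinish (edge_arc gam u v) = v \<and> path_image (edge_arc gam u v) = path_image (gam {u, v})"
    by cases (use ab in \<open>simp_all add: edge_arc_def arc_reversepath\<close>)
  then show "arc (edge_arc gam u v)" "pathstart (edge_arc gam u v) = u"
    "pathfinish (edge_arc gam u v) = v" "path_image (edge_arc gam u v) = path_image (gam {u, v})"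
    by simp_all
qed

lemma triangle_loop:
  assumes e: "{x, y} \<in> E" "{x, z} \<in> E" "{y, z} \<in> E" and d: "x \<noteq> y" "x \<noteq> z" "y \<noteq> z"
  shows "arc (arc_via gam x z y)" "pathstart (arc_via gam x z y) = x" "pathfinish (arc_via gam x z y) = y"
    "path_image (arc_via gam x z y) = path_image (gam {x, z}) \<union> path_image (gam {y, z})"
    "simple_path (triangle_loop gam x y z)"
    "pathfinish (triangle_loop gam x y z) = pathstart (triangle_loop gam x y z)"
    "path_image (triangle_loop gam x y z)
       = path_image (gam {x, y}) \<union> path_image (gam {y, z}) \<union> path_image (gam {x, z})"
proof -
  have e': "{z, y} \<in> E" "{y, x} \<in> E" and sym: "{z, y} = {y, z}" "{y, x} = {x, y}"
    using e by (auto simp: insert_commute)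
  note xz = edge_arc[OF e(2)] and zy = edge_arc[OF e'(1)] and yx = edge_arc[OF e'(2)]
  have "{x, z} \<noteq> {y, z}" "{x, z} \<noteq> {x, y}" "{y, z} \<noteq> {x, y}"
    using d by (auto simp: doubleton_eq_iff)
  then have meet: "path_image (gam {x, z}) \<inter> path_image (gam {y, z}) \<subseteq> {z}"
    "path_image (gam {x, z}) \<inter> path_image (gam {x, y}) \<subseteq> {x}"
    "path_image (gam {y, z}) \<inter> path_image (gam {x, y}) \<subseteq> {y}"
    using arcs_meet_in_common_ends[OF e(2,3)] arcs_meet_in_common_ends[OF e(2,1)]
      arcs_meet_in_common_ends[OF e(3,1)] d by auto
  show arc: "arc (arc_via gam x z y)"
    unfolding arc_via_def using xz zy meet sym by (intro arc_join) auto
  show start: "pathstart (arc_via gam x z y) = x" and finish: "pathfinish (arc_via gam x z y) = y"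
    unfolding arc_via_def using xz zy by simp_all
  show image: "path_image (arc_via gam x z y) = path_image (gam {x, z}) \<union> path_image (gam {y, z})"
    unfolding arc_via_def using xz zy sym by (simp add: path_image_join)
  show "simple_path (triangle_loop gam x y z)"
    unfolding triangle_loop_def using arc start finish image yx meet sym
    by (intro simple_path_join_loop) auto
  show "pathfinish (triangle_loop gam x y z) = pathstart (triangle_loop gam x y z)"
    unfolding triangle_loop_def using start yx by simp
  show "path_image (triangle_loop gam x y z)
      = path_image (gam {x, y}) \<union> path_image (gam {y, z}) \<union> path_image (gam {x, z})"
    unfolding triangle_loop_def using image finish yx sym by (auto simp: path_image_join)
qed

lemma winding_number_triangle_loop:
  assumes "{x, y} \<in> E" "{x, z} \<in> E" "{y, z} \<in> E" "x \<noteq> y" "x \<noteq> z" "y \<noteq> z"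
    and w: "w \<notin> drawing V E gam"
  shows "winding_number (triangle_loop gam x y z) w
    = winding_number (arc_via gam x z y) w + winding_number (edge_arc gam y x) w"
proof -
  note tri = triangle_loop[OF assms(1-6)]
  have yx: "{y, x} \<in> E" "{y, x} = {x, y}"
    using assms(1) by (auto simp: insert_commute)
  note e = edge_arc[OF yx(1)]
  have "w \<notin> path_image (arc_via gam x z y)" "w \<notin> path_image (edge_arc gam y x)"
    using tri(4) e(4) yx w assms(1-3) arc_subset_drawing by blast+
  then show ?thesis
    unfolding triangle_loop_def using tri(1,3) e(1,2) by (intro winding_number_join) (auto simp: arc_imp_path)
qed

text \<open>Near an inner point p of the edge xy, the difference of the winding numbers of two triangles
  on xy is the winding number of a loop avoiding p, since the common edge cancels.\<close>

lemma triangle_winding_difference_locally_constant: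
  assumes xy: "{x, y} \<in> E" "x \<noteq> y"
    and z2: "z2 \<noteq> x" "z2 \<noteq> y" "{x, z2} \<in> E" "{y, z2} \<in> E"
    and z3: "z3 \<noteq> x" "z3 \<noteq> y" "{x, z3} \<in> E" "{y, z3} \<in> E"
    and p: "p \<in> path_image (gam {x, y})" "p \<notin> V"
  obtains r where "r > 0" "\<forall>w\<in>ball p r - drawing V E gam. \<forall>w'\<in>ball p r - drawing V E gam.
      winding_number (triangle_loop gam x y z2) w - winding_number (triangle_loop gam x y z3) w
    = winding_number (triangle_loop gam x y z2) w' - winding_number (triangle_loop gam x y z3) w'"
proof -
  note tri2 = triangle_loop[OF xy(1) z2(3,4) xy(2) z2(1,2)[symmetric]]
  note tri3 = triangle_loop[OF xy(1) z3(3,4) xy(2) z3(1,2)[symmetric]]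
  let ?P2 = "path_image (arc_via gam x z2 y)" and ?P3 = "path_image (arc_via gam x z3 y)"
  let ?L = "arc_via gam x z2 y +++ reversepath (arc_via gam x z3 y)"
  have "p \<notin> ?P2 \<union> ?P3"
  proof
    assume "p \<in> ?P2 \<union> ?P3"
    then obtain h where "h \<in> {{x, z2}, {y, z2}, {x, z3}, {y, z3}}" "p \<in> path_image (gam h)"
      using tri2(4) tri3(4) by blast
    then show False
      using edge_eq_if_arcs_share_inner_point[OF xy(1) _ p(1) _ p(2)] z2 z3 xy(2)
      by (auto simp: doubleton_eq_iff)
  qed
  moreover have "open (- (?P2 \<union> ?P3))"
    using tri2(1) tri3(1) by (intro open_Compl closed_Un closed_path_image arc_imp_path)
  ultimately obtain r where r: "r > 0" "ball p r \<subseteq> - (?P2 \<union> ?P3)"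
    using open_contains_ball by blast
  have difference: "winding_number (triangle_loop gam x y z2) w - winding_number (triangle_loop gam x y z3) w
      = winding_number ?L w" if "w \<in> ball p r - drawing V E gam" for w
  proof -
    have "winding_number (triangle_loop gam x y z2) w - winding_number (triangle_loop gam x y z3) w
        = winding_number (arc_via gam x z2 y) w - winding_number (arc_via gam x z3 y) w"
      using that winding_number_triangle_loop[OF xy(1) z2(3,4) xy(2) z2(1,2)[symmetric], of w]
        winding_number_triangle_loop[OF xy(1) z3(3,4) xy(2) z3(1,2)[symmetric], of w] by simp
    also have "\<dots> = winding_number ?L w"
      using that r(2) tri2(1-3) tri3(1-3)
      by (subst winding_number_join) (auto simp: arc_imp_path winding_number_reversepath)
    finally show ?thesis .
  qed
  have "winding_number ?L constant_on ball p r"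
    using tri2(1-4) tri3(1-4) r(2)
    by (intro winding_number_constant) (auto simp: arc_imp_path path_image_join)
  then show thesis
    using that[OF r(1)] difference unfolding constant_on_def by (metis (no_types, lifting) Diff_iff)
qed

end

section \<open>Cells of a combinatorial annulus\<close>

lemma card_le_2_if_no_three_distinct:
  assumes "\<And>a b c. a \<in> S \<Longrightarrow> b \<in> S \<Longrightarrow> c \<in> S \<Longrightarrow> a \<noteq> b \<Longrightarrow> a \<noteq> c \<Longrightarrow> b \<noteq> c \<Longrightarrow> False"
  shows "finite S" "card S \<le> 2"
proof -
  have "\<exists>a b. S \<subseteq> {a, b}"
  proof (cases "S = {}")
    case False
    then obtain a where a: "a \<in> S"
      by blast
    show ?thesis
    proof (cases "S \<subseteq> {a}")
      case False
      then obtain b where "b \<in> S" "b \<noteq> a"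
        by blast
      then have "S \<subseteq> {a, b}"
        using assms a by blast
      then show ?thesis
        by blast
    qed blast
  qed blast
  then obtain a b where sub: "S \<subseteq> {a, b}"
    by blast
  then show "finite S"
    by (rule finite_subset) simp
  have "card S \<le> card {a, b}"
    using sub by (rule card_mono[rotated]) simp
  also have "\<dots> \<le> 2"
    by (simp add: card_insert_if)
  finally show "card S \<le> 2" .
qed

locale combinatorial_annulus = plane_graph +
  fixes J1 J2 :: "real \<Rightarrow> complex"
  assumes annulus: "comb_annulus V E gam J1 J2"
begin

lemma jordan_boundaries:
  "simple_path J1" "pathfinish J1 = pathstart J1" "simple_path J2" "pathfinish J2 = pathstart J2"
  using annulus by (simp_all add: comb_annulus_def jordan_curve_def)

lemma boundaries_subset_drawing: "path_image J1 \<subseteq> drawing V E gam" "path_image J2 \<subseteq> drawing V E gam"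
  using annulus by (simp_all add: comb_annulus_def)

lemma boundaries_disjoint: "path_image J1 \<inter> path_image J2 = {}"
  using annulus inside_no_overlap unfolding comb_annulus_def by blast

lemma cell_triangleE:
  assumes "C \<in> cells V E gam J1 J2"
  obtains x y z where "x \<noteq> y" "y \<noteq> z" "x \<noteq> z" "{x, y} \<in> E" "{y, z} \<in> E" "{x, z} \<in> E"
    "frontier C = path_image (gam {x, y}) \<union> path_image (gam {y, z}) \<union> path_image (gam {x, z})"
proof -
  have "\<forall>C\<in>cells V E gam J1 J2. \<exists>x y z. x \<noteq> y \<and> y \<noteq> z \<and> x \<noteq> z \<and>
      {x, y} \<in> E \<and> {y, z} \<in> E \<and> {x, z} \<in> E \<and>
      frontier C = path_image (gam {x, y}) \<union> path_image (gam {y, z}) \<union> path_image (gam {x, z})"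
    using annulus unfolding comb_annulus_def by (elim conjE)
  then have "\<exists>x y z. x \<noteq> y \<and> y \<noteq> z \<and> x \<noteq> z \<and> {x, y} \<in> E \<and> {y, z} \<in> E \<and> {x, z} \<in> E \<and>
      frontier C = path_image (gam {x, y}) \<union> path_image (gam {y, z}) \<union> path_image (gam {x, z})"
    using assms by (rule bspec)
  then show thesis
    using that by blast
qed

lemma cell_topology:
  assumes "C \<in> cells V E gam J1 J2"
  shows "open C" "connected C" "C \<noteq> {}" "C \<inter> drawing V E gam = {}" "bounded C"
proof -
  have "open (annulus_open J1 J2 - drawing V E gam)"
    unfolding annulus_open_def using jordan_boundaries
    by (intro open_Diff open_Int open_inside open_outside closed_drawing closed_path_image simple_path_imp_path)
  moreover have C: "C \<in> components (annulus_open J1 J2 - drawing V E gam)"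
    using assms by (simp add: cells_def)
  ultimately show "open C" "connected C" "C \<noteq> {}" "C \<inter> drawing V E gam = {}"
    using open_components in_components_connected in_components_nonempty in_components_subset by blast+
  have "bounded (inside (path_image J2))"
    using jordan_boundaries by (simp add: bounded_inside bounded_path_image simple_path_imp_path)
  moreover have "C \<subseteq> inside (path_image J2)"
    using in_components_subset[OF C] by (auto simp: annulus_open_def)
  ultimately show "bounded C"
    using bounded_subset by blast
qed

lemma closure_cell_inter_drawing:
  "C \<in> cells V E gam J1 J2 \<Longrightarrow> p \<in> closure C \<Longrightarrow> p \<in> drawing V E gam \<Longrightarrow> p \<in> frontier C"
  using cell_topology[of C] closure_Un_frontier by blast

lemma cell_eq_inside:
  assumes C: "C \<in> cells V E gam J1 J2"
    and L: "simple_path L" "pathfinish L = pathstart L" "path_image L = frontier C"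
  shows "C = inside (path_image L)"
proof -
  let ?L = "path_image L"
  note cell = cell_topology[OF C]
  note jordan = Jordan_inside_outside[OF L(1,2)]
  have closure: "closure C = C \<union> ?L"
    using L(3) closure_Un_frontier by blast
  have "C \<inter> ?L = {}"
    using cell(1) L(3) by (simp add: frontier_def interior_open)
  then have C_sub: "C \<subseteq> inside ?L \<union> outside ?L"
    using jordan by blast
  then have "inside ?L \<inter> C = {} \<or> outside ?L \<inter> C = {}"
    using connectedD[OF cell(2), of "inside ?L" "outside ?L"] jordan by blast
  then consider "C \<subseteq> inside ?L" | "C \<subseteq> outside ?L"
    using C_sub by blast
  then show ?thesis
  proof cases
    case 1
    have "closure C \<inter> inside ?L \<subseteq> C"
      using closure inside_no_overlap by blast
    then show ?thesis
      using connected_eq_if_clopen_subset[of "inside ?L" C] jordan cell 1 by blast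
  next
    case 2
    have "closure C \<inter> outside ?L \<subseteq> C"
      using closure outside_no_overlap by blast
    then have "C = outside ?L"
      using connected_eq_if_clopen_subset[of "outside ?L" C] jordan cell 2 by blast
    then show ?thesis
      using cell(5) jordan by simp
  qed
qed

lemma winding_number_cell_triangle:
  assumes C: "C \<in> cells V E gam J1 J2"
    and e: "{x, y} \<in> E" "{x, z} \<in> E" "{y, z} \<in> E" and d: "x \<noteq> y" "x \<noteq> z" "y \<noteq> z"
    and frontier: "frontier C = path_image (gam {x, y}) \<union> path_image (gam {y, z}) \<union> path_image (gam {x, z})"
  shows "\<And>w. w \<in> C \<Longrightarrow> winding_number (triangle_loop gam x y z) w \<noteq> 0"
    "\<And>w C'. C' \<in> cells V E gam J1 J2 \<Longrightarrow> C' \<noteq> C \<Longrightarrow> w \<in> C' \<Longrightarrow> winding_number (triangle_loop gam x y z) w = 0"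
proof -
  note tri = triangle_loop[OF e d]
  let ?T = "triangle_loop gam x y z"
  have inside: "C = inside (path_image ?T)"
    using cell_eq_inside[OF C tri(5,6)] tri(7) frontier by simp
  show "winding_number ?T w \<noteq> 0" if "w \<in> C" for w
    using simple_closed_path_norm_winding_number_inside[OF tri(5)] that inside by fastforce
  show "winding_number ?T w = 0" if C': "C' \<in> cells V E gam J1 J2" "C' \<noteq> C" "w \<in> C'" for w C'
  proof -
    have "w \<notin> inside (path_image ?T)"
      using components_nonoverlap C C' inside unfolding cells_def by blast
    moreover have "w \<notin> path_image ?T"
      using tri(7) e arc_subset_drawing cell_topology(4)[OF C'(1)] C'(3) by blast
    ultimately have "w \<in> outside (path_image ?T)"
      using inside_Un_outside by blast
    then show ?thesis
      using winding_number_zero_in_outside[OF simple_path_imp_path[OF tri(5)] tri(6)] by blast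
  qed
qed

definition cells_at :: "complex \<Rightarrow> complex \<Rightarrow> complex set set" where
  "cells_at x y = {C \<in> cells V E gam J1 J2. \<exists>z. z \<noteq> x \<and> z \<noteq> y \<and> {x, z} \<in> E \<and> {y, z} \<in> E \<and>
      frontier C = path_image (gam {x, y}) \<union> path_image (gam {y, z}) \<union> path_image (gam {x, z})}"

text \<open>By the winding numbers of the triangles bounding C2 and C3, whose difference is locally
  constant near the edge xy: it vanishes on C1 and not on C2, and both cells come arbitrarily close
  to an inner point of xy.\<close>

lemma no_three_cells_at:
  assumes xy: "{x, y} \<in> E" "x \<noteq> y"
    and C: "C1 \<in> cells_at x y" "C2 \<in> cells_at x y" "C3 \<in> cells_at x y"
    and distinct: "C1 \<noteq> C2" "C1 \<noteq> C3" "C2 \<noteq> C3"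
  shows False
proof -
  obtain z2 where z2: "z2 \<noteq> x" "z2 \<noteq> y" "{x, z2} \<in> E" "{y, z2} \<in> E"
      "frontier C2 = path_image (gam {x, y}) \<union> path_image (gam {y, z2}) \<union> path_image (gam {x, z2})"
    using C(2) unfolding cells_at_def by blast
  obtain z3 where z3: "z3 \<noteq> x" "z3 \<noteq> y" "{x, z3} \<in> E" "{y, z3} \<in> E"
      "frontier C3 = path_image (gam {x, y}) \<union> path_image (gam {y, z3}) \<union> path_image (gam {x, z3})"
    using C(3) unfolding cells_at_def by blast
  have cells: "C1 \<in> cells V E gam J1 J2" "C2 \<in> cells V E gam J1 J2" "C3 \<in> cells V E gam J1 J2"
    using C unfolding cells_at_def by auto
  note wn2 = winding_number_cell_triangle[OF cells(2) xy(1) z2(3,4) xy(2) z2(1,2)[symmetric] z2(5)]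
  note wn3 = winding_number_cell_triangle[OF cells(3) xy(1) z3(3,4) xy(2) z3(1,2)[symmetric] z3(5)]
  obtain p where p: "p \<in> path_image (gam {x, y})" "p \<notin> V"
    using arc_inner_point[OF xy(1)] by blast
  obtain r where r: "r > 0" and const: "\<forall>w\<in>ball p r - drawing V E gam. \<forall>w'\<in>ball p r - drawing V E gam.
      winding_number (triangle_loop gam x y z2) w - winding_number (triangle_loop gam x y z3) w
    = winding_number (triangle_loop gam x y z2) w' - winding_number (triangle_loop gam x y z3) w'"
    by (rule triangle_winding_difference_locally_constant[OF xy z2(1-4) z3(1-4) p])
  have near: "\<exists>w\<in>C. w \<in> ball p r" if "C \<in> cells_at x y" for C
  proof -
    have "p \<in> frontier C"
      using that p(1) unfolding cells_at_def by blast
    then have "p \<in> closure C"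
      by (simp add: frontier_def)
    then obtain w where "w \<in> C" "dist w p < r"
      using closure_approachable r by blast
    then show ?thesis
      by (auto simp: dist_commute)
  qed
  obtain w1 w2 where w: "w1 \<in> C1" "w1 \<in> ball p r" "w2 \<in> C2" "w2 \<in> ball p r"
    using near C(1,2) by blast
  then have "w1 \<in> ball p r - drawing V E gam" "w2 \<in> ball p r - drawing V E gam"
    using cell_topology(4) cells(1,2) by blast+
  moreover have "winding_number (triangle_loop gam x y z2) w1 - winding_number (triangle_loop gam x y z3) w1 = 0"
    using wn2(2)[OF cells(1) distinct(1) w(1)] wn3(2)[OF cells(1) distinct(2) w(1)] by simp
  moreover have "winding_number (triangle_loop gam x y z2) w2 - winding_number (triangle_loop gam x y z3) w2 \<noteq> 0"
    using wn2(1)[OF w(3)] wn3(2)[OF cells(2) distinct(3) w(3)] by simp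
  ultimately show False
    using const[rule_format, of w1 w2] by simp
qed

lemma card_cells_at_le_2:
  assumes "{x, y} \<in> E" "x \<noteq> y"
  shows "finite (cells_at x y)" "card (cells_at x y) \<le> 2"
proof -
  have "\<And>C1 C2 C3. C1 \<in> cells_at x y \<Longrightarrow> C2 \<in> cells_at x y \<Longrightarrow> C3 \<in> cells_at x y \<Longrightarrow>
      C1 \<noteq> C2 \<Longrightarrow> C1 \<noteq> C3 \<Longrightarrow> C2 \<noteq> C3 \<Longrightarrow> False"
    using no_three_cells_at[OF assms] by blast
  then show "finite (cells_at x y)" "card (cells_at x y) \<le> 2"
    using card_le_2_if_no_three_distinct by blast+
qed

lemma card_frontier_edges_le_3:
  assumes C: "C \<in> cells V E gam J1 J2"
  shows "finite {h \<in> E. path_image (gam h) \<subseteq> frontier C}" "card {h \<in> E. path_image (gam h) \<subseteq> frontier C} \<le> 3"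
proof -
  obtain a b c where abc: "a \<noteq> b" "b \<noteq> c" "a \<noteq> c" "{a, b} \<in> E" "{b, c} \<in> E" "{a, c} \<in> E"
    "frontier C = path_image (gam {a, b}) \<union> path_image (gam {b, c}) \<union> path_image (gam {a, c})"
    by (rule cell_triangleE[OF C])
  have sub: "{h \<in> E. path_image (gam h) \<subseteq> frontier C} \<subseteq> {{a, b}, {b, c}, {a, c}}"
  proof
    fix h
    assume h: "h \<in> {h \<in> E. path_image (gam h) \<subseteq> frontier C}"
    then obtain p where p: "p \<in> path_image (gam h)" "p \<notin> V"
      using arc_inner_point by blast
    then obtain t where "t \<in> {{a, b}, {b, c}, {a, c}}" "p \<in> path_image (gam t)"
      using h abc(7) by blast
    then show "h \<in> {{a, b}, {b, c}, {a, c}}"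
      using edge_eq_if_arcs_share_inner_point[OF _ _ p(1) _ p(2)] h abc(4-6) by blast
  qed
  then show "finite {h \<in> E. path_image (gam h) \<subseteq> frontier C}"
    using finite_subset by blast
  have "card {h \<in> E. path_image (gam h) \<subseteq> frontier C} \<le> card {{a, b}, {b, c}, {a, c}}"
    by (rule card_mono[OF _ sub]) simp
  also have "\<dots> \<le> 3"
    using card_length[of "[{a, b}, {b, c}, {a, c}]"] by simp
  finally show "card {h \<in> E. path_image (gam h) \<subseteq> frontier C} \<le> 3" .
qed

lemma crossing_walkE:
  obtains ws where "walk E ws" "hd ws \<in> V \<inter> path_image J1" "last ws \<in> V \<inter> path_image J2"
proof -
  obtain a b where ab: "a \<in> V \<inter> path_image J1" "b \<in> V \<inter> path_image J2"
    using jordan_curve_meets_vertices jordan_boundaries boundaries_subset_drawing by blast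
  then have "a \<in> V" "b \<in> V"
    by blast+
  then obtain ws where "walk E ws" "hd ws = a" "last ws = b"
    by (rule walk_between_vertices)
  with ab that show thesis
    by blast
qed

lemma edges_nonempty: "E \<noteq> {}"
proof -
  obtain ws where ws: "walk E ws" "hd ws \<in> V \<inter> path_image J1" "last ws \<in> V \<inter> path_image J2"
    by (rule crossing_walkE)
  have "hd ws \<noteq> last ws"
    using ws(2,3) boundaries_disjoint by auto
  with ws(1) show ?thesis
    by (rule walk_nonempty_edges)
qed

end

section \<open>Refinements\<close>

lemma eInc_subset: "eInc E' gam' gam e \<subseteq> E'"
  by (auto simp: eInc_def)

definition vertex_proj :: "complex set \<Rightarrow> complex set set \<Rightarrow> (complex set \<Rightarrow> real \<Rightarrow> complex) \<Rightarrow> complex \<Rightarrow> complex" where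
  "vertex_proj V E gam v = (if v \<in> V then v else (SOME x. \<exists>e\<in>E. v \<in> path_image (gam e) \<and> x \<in> e))"

locale annulus_refinement = combinatorial_annulus +
  fixes V' :: "complex set" and E' :: "complex set set" and gam' :: "complex set \<Rightarrow> real \<Rightarrow> complex"
  assumes refinement: "ann_refinement V E gam J1 J2 V' E' gam'"
begin

sublocale ref: plane_graph V' E' gam'
  using refinement by unfold_locales (simp add: ann_refinement_def)

lemma vertices_subset: "V \<subseteq> V'"
  using refinement by (simp add: ann_refinement_def)

lemma refined_vertices_subset: "V' \<subseteq> V \<union> (\<Union>e\<in>E. path_image (gam e))"
  using refinement by (simp add: ann_refinement_def)

lemma refined_vertices_subset_drawing: "V' \<subseteq> drawing V E gam"
  unfolding drawing_def by (rule refined_vertices_subset)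

lemma refined_edge_in_cell:
  assumes "e' \<in> E'"
  shows "\<exists>C\<in>cells V E gam J1 J2. path_image (gam' e') \<subseteq> closure C"
proof -
  have "\<forall>e'\<in>E'. \<exists>C\<in>cells V E gam J1 J2. path_image (gam' e') \<subseteq> closure C"
    using refinement unfolding ann_refinement_def by (elim conjE)
  then show ?thesis
    using assms by (rule bspec)
qed

lemma subdivision_pathE:
  assumes "e \<in> E"
  obtains x y ws where "e = {x, y}" "ws \<noteq> []" "hd ws = x" "last ws = y"
    "\<forall>i. Suc i < length ws \<longrightarrow> {ws ! i, ws ! Suc i} \<in> E'"
    "(\<Union>i\<in>{i. Suc i < length ws}. path_image (gam' {ws ! i, ws ! Suc i})) = path_image (gam e)"
proof -
  have "\<forall>e\<in>E. \<exists>x y ws. e = {x, y} \<and> ws \<noteq> [] \<and> hd ws = x \<and> last ws = y \<and>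
      (\<forall>i. Suc i < length ws \<longrightarrow> {ws ! i, ws ! Suc i} \<in> E') \<and>
      (\<forall>i. 0 < i \<and> Suc i < length ws \<longrightarrow> ws ! i \<notin> V) \<and>
      (\<Union>i\<in>{i. Suc i < length ws}. path_image (gam' {ws ! i, ws ! Suc i})) = path_image (gam e)"
    using refinement unfolding ann_refinement_def by (elim conjE)
  then have "\<exists>x y ws. e = {x, y} \<and> ws \<noteq> [] \<and> hd ws = x \<and> last ws = y \<and>
      (\<forall>i. Suc i < length ws \<longrightarrow> {ws ! i, ws ! Suc i} \<in> E') \<and>
      (\<forall>i. 0 < i \<and> Suc i < length ws \<longrightarrow> ws ! i \<notin> V) \<and>
      (\<Union>i\<in>{i. Suc i < length ws}. path_image (gam' {ws ! i, ws ! Suc i})) = path_image (gam e)"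
    using assms by (rule bspec)
  then show thesis
    using that by blast
qed

lemma subdivision_walk:
  assumes "e \<in> E"
  obtains x y ws where "e = {x, y}" "walk (eInc E' gam' gam e) ws" "hd ws = x" "last ws = y"
proof -
  obtain x y ws where ws: "e = {x, y}" "ws \<noteq> []" "hd ws = x" "last ws = y"
    "\<forall>i. Suc i < length ws \<longrightarrow> {ws ! i, ws ! Suc i} \<in> E'"
    "(\<Union>i\<in>{i. Suc i < length ws}. path_image (gam' {ws ! i, ws ! Suc i})) = path_image (gam e)"
    by (rule subdivision_pathE[OF assms])
  have "edge_path (eInc E' gam' gam e) ws"
    unfolding edge_path_def eInc_def using ws(2,5,6) by blast
  then show thesis
    using that ws(1,3,4) by (simp add: edge_path_iff_walk)
qed

lemma vInc_subset_eInc: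
  assumes "e \<in> E"
  shows "vInc V' gam e \<subseteq> \<Union> (eInc E' gam' gam e)"
proof
  fix w
  assume w: "w \<in> vInc V' gam e"
  obtain x y ws where ws: "\<forall>i. Suc i < length ws \<longrightarrow> {ws ! i, ws ! Suc i} \<in> E'"
    "(\<Union>i\<in>{i. Suc i < length ws}. path_image (gam' {ws ! i, ws ! Suc i})) = path_image (gam e)"
    by (rule subdivision_pathE[OF assms])
  have "w \<in> path_image (gam e)" "w \<in> V'"
    using w by (auto simp: vInc_def)
  then obtain i where i: "Suc i < length ws" "w \<in> path_image (gam' {ws ! i, ws ! Suc i})"
    using ws(2) by blast
  then have "{ws ! i, ws ! Suc i} \<in> E'"
    using ws(1) by blast
  moreover from this have "w \<in> {ws ! i, ws ! Suc i}"
    using ref.arc_inter_vertices i(2) \<open>w \<in> V'\<close> by blast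
  moreover have "path_image (gam' {ws ! i, ws ! Suc i}) \<subseteq> path_image (gam e)"
    using ws(2) i(1) by blast
  ultimately show "w \<in> \<Union> (eInc E' gam' gam e)"
    unfolding eInc_def by blast
qed

lemma disjoint_eInc: "disjoint_family_on (eInc E' gam' gam) E"
  unfolding disjoint_family_on_def
proof (intro ballI impI, rule ccontr)
  fix e1 e2
  assume e: "e1 \<in> E" "e2 \<in> E" "e1 \<noteq> e2" and "eInc E' gam' gam e1 \<inter> eInc E' gam' gam e2 \<noteq> {}"
  then obtain e' where e': "e' \<in> E'" "path_image (gam' e') \<subseteq> path_image (gam e1) \<inter> path_image (gam e2)"
    unfolding eInc_def by blast
  then have "e' \<subseteq> e1" "e' \<subseteq> e2"
    using ref.edge_subset_arc[OF e'(1)] arcs_meet_in_common_ends[OF e] by blast+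
  moreover have "finite e1" "finite e2"
    using card_edge e(1,2) by (simp_all add: card_ge_0_finite)
  ultimately have "e' = e1" "e' = e2"
    using card_seteq ref.card_edge[OF e'(1)] card_edge e(1,2) by (metis order_refl)+
  then show False
    using e(3) by simp
qed

lemma lift_edge:
  assumes e: "{a, c} \<in> E" and nonneg: "\<forall>e\<in>E'. 0 \<le> m' e"
  obtains ws where "walk E' ws" "hd ws = a" "last ws = c"
    "walk_len m' ws \<le> sum m' (eInc E' gam' gam {a, c})"
proof -
  let ?S = "eInc E' gam' gam {a, c}"
  obtain x y ws where ws: "{a, c} = {x, y}" "walk ?S ws" "hd ws = x" "last ws = y"
    by (rule subdivision_walk[OF e])
  have "\<exists>ws'. walk ?S ws' \<and> hd ws' = a \<and> last ws' = c"
  proof (cases "a = x")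
    case True
    then show ?thesis
      using ws by (auto simp: doubleton_eq_iff)
  next
    case False
    then have "a = y" "c = x"
      using ws(1) by (auto simp: doubleton_eq_iff)
    then show ?thesis
      using ws walk_rev[OF ws(2)] by (intro exI[of _ "rev ws"]) (auto simp: hd_rev last_rev)
  qed
  then obtain ws' where ws': "walk ?S ws'" "hd ws' = a" "last ws' = c"
    by blast
  obtain ws'' where ws'': "walk ?S ws''" "distinct ws''" "hd ws'' = hd ws'" "last ws'' = last ws'"
    by (rule walk_shortcut[OF ws'(1)])
  have "finite ?S"
    using finite_subset[OF eInc_subset ref.finite_edges] .
  then have "walk_len m' ws'' \<le> sum m' ?S"
    using distinct_walk_len_le_sum[OF ws''(1,2)] nonneg eInc_subset by blast
  moreover have "walk E' ws''"
    using walk_mono[OF ws''(1) eInc_subset] .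
  ultimately show thesis
    using that ws'' ws'(2,3) by simp
qed

lemma lift_walk:
  assumes nonneg: "\<forall>e\<in>E'. 0 \<le> m' e" and "walk E ws"
  shows "\<exists>ws'. walk E' ws' \<and> hd ws' = hd ws \<and> last ws' = last ws \<and>
    walk_len m' ws' \<le> walk_len (\<lambda>e. sum m' (eInc E' gam' gam e)) ws"
  using assms(2)
proof (induction ws rule: induct_list012)
  case (2 x)
  then show ?case
    by (intro exI[of _ "[x]"]) simp
next
  case (3 x y zs)
  have "{x, y} \<in> E"
    using "3.prems" by simp
  then obtain ws1 where ws1: "walk E' ws1" "hd ws1 = x" "last ws1 = y"
      "walk_len m' ws1 \<le> sum m' (eInc E' gam' gam {x, y})"
    using nonneg by (rule lift_edge)
  obtain ws2 where ws2: "walk E' ws2" "hd ws2 = y" "last ws2 = last (y # zs)"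
      "walk_len m' ws2 \<le> walk_len (\<lambda>e. sum m' (eInc E' gam' gam e)) (y # zs)"
    using "3.IH" "3.prems" by auto
  note join = walk_join[OF ws1(1) ws2(1)]
  show ?case
    using join ws1 ws2 by (intro exI[of _ "ws1 @ tl ws2"]) (simp add: add_mono)
qed simp

lemma crossing_walks_nonempty:
  "crossing_walks E (V \<inter> path_image J1) (V \<inter> path_image J2) \<noteq> {}"
  "crossing_walks E' (V' \<inter> path_image J1) (V' \<inter> path_image J2) \<noteq> {}"
proof -
  obtain ws where ws: "walk E ws" "hd ws \<in> V \<inter> path_image J1" "last ws \<in> V \<inter> path_image J2"
    by (rule crossing_walkE)
  then show "crossing_walks E (V \<inter> path_image J1) (V \<inter> path_image J2) \<noteq> {}"
    by (auto simp: crossing_walks_def)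
  obtain ws' where "walk E' ws'" "hd ws' = hd ws" "last ws' = last ws"
    using lift_walk[of "\<lambda>_. 0", OF _ ws(1)] by auto
  then have "ws' \<in> crossing_walks E' (V' \<inter> path_image J1) (V' \<inter> path_image J2)"
    using ws vertices_subset by (auto simp: crossing_walks_def)
  then show "crossing_walks E' (V' \<inter> path_image J1) (V' \<inter> path_image J2) \<noteq> {}"
    by blast
qed

lemma refined_edges_nonempty: "E' \<noteq> {}"
proof -
  obtain ws where ws: "walk E' ws" "hd ws \<in> path_image J1" "last ws \<in> path_image J2"
    using crossing_walks_nonempty(2) unfolding crossing_walks_def by blast
  have "hd ws \<noteq> last ws"
    using ws(2,3) boundaries_disjoint by auto
  with ws(1) show ?thesis
    by (rule walk_nonempty_edges)
qed

lemma crossing_len_refined_le: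
  assumes nonneg: "\<forall>e\<in>E'. 0 \<le> m' e"
  shows "crossing_len E' (V' \<inter> path_image J1) (V' \<inter> path_image J2) m'
    \<le> crossing_len E (V \<inter> path_image J1) (V \<inter> path_image J2) (\<lambda>e. sum m' (eInc E' gam' gam e))"
proof (rule le_crossing_len[OF crossing_walks_nonempty(1)])
  fix ws
  assume ws: "ws \<in> crossing_walks E (V \<inter> path_image J1) (V \<inter> path_image J2)"
  then have "walk E ws"
    by (simp add: crossing_walks_def)
  then obtain ws' where ws': "walk E' ws'" "hd ws' = hd ws" "last ws' = last ws"
      "walk_len m' ws' \<le> walk_len (\<lambda>e. sum m' (eInc E' gam' gam e)) ws"
    using lift_walk[OF nonneg] by blast
  then have "ws' \<in> crossing_walks E' (V' \<inter> path_image J1) (V' \<inter> path_image J2)"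
    using ws vertices_subset by (auto simp: crossing_walks_def)
  then show "crossing_len E' (V' \<inter> path_image J1) (V' \<inter> path_image J2) m'
      \<le> walk_len (\<lambda>e. sum m' (eInc E' gam' gam e)) ws"
    using crossing_len_le[OF _ nonneg] ws'(4) by (meson order_trans)
qed

theorem EEL_refinement_le:
  assumes "weakly_bounded b E gam E' gam'"
  shows "EEL E' (V' \<inter> path_image J1) (V' \<inter> path_image J2) \<le> b * EEL E (V \<inter> path_image J1) (V \<inter> path_image J2)"
proof (rule EEL_le_by_transfer[OF ref.finite_edges refined_edges_nonempty crossing_walks_nonempty(2)
      finite_edges edges_nonempty crossing_walks_nonempty(1)])
  fix m'
  assume "admissible E' m'"
  then have nonneg: "\<forall>e\<in>E'. 0 \<le> m' e"
    by (simp add: admissible_def)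
  let ?m = "\<lambda>e. sum m' (eInc E' gam' gam e)"
  have "\<forall>e\<in>E. 0 \<le> ?m e"
    using nonneg eInc_subset by (meson sum_nonneg subsetD)
  moreover have "metric_area E ?m \<le> b * metric_area E' m'"
    using assms disjoint_eInc eInc_subset
    by (intro metric_area_push_le finite_edges ref.finite_edges) (auto simp: weakly_bounded_def)
  ultimately show "\<exists>mt. (\<forall>e\<in>E. 0 \<le> mt e) \<and> metric_area E mt \<le> b * metric_area E' m' \<and>
      crossing_len E' (V' \<inter> path_image J1) (V' \<inter> path_image J2) m'
        \<le> crossing_len E (V \<inter> path_image J1) (V \<inter> path_image J2) mt"
    using crossing_len_refined_le[OF nonneg] by (intro exI[of _ ?m]) blast
qed simp

end

section \<open>Projecting the refinement onto the annulus\<close>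

lemma triangle_relabel:
  assumes "a \<noteq> b" "b \<noteq> c" "a \<noteq> c" "{a, b} \<in> E" "{b, c} \<in> E" "{a, c} \<in> E"
    and "x \<in> {a, b, c}" "y \<in> {a, b, c}" "x \<noteq> y"
  obtains z where "z \<noteq> x" "z \<noteq> y" "{x, z} \<in> E" "{y, z} \<in> E"
    "P {a, b} \<union> P {b, c} \<union> P {a, c} = P {x, y} \<union> P {y, z} \<union> P {x, z}"
proof -
  have sym: "{b, a} = {a, b}" "{c, b} = {b, c}" "{c, a} = {a, c}"
    by auto
  consider "x = a" "y = b" | "x = b" "y = a" | "x = a" "y = c" | "x = c" "y = a" | "x = b" "y = c" | "x = c" "y = b"
    using assms(7-9) by blast
  then show thesis
  proof cases
    case 1 with assms show thesis by (intro that[of c]) (auto simp: sym)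
  next
    case 2 with assms show thesis by (intro that[of c]) (auto simp: sym)
  next
    case 3 with assms show thesis by (intro that[of b]) (auto simp: sym)
  next
    case 4 with assms show thesis by (intro that[of b]) (auto simp: sym)
  next
    case 5 with assms show thesis by (intro that[of a]) (auto simp: sym)
  next
    case 6 with assms show thesis by (intro that[of a]) (auto simp: sym)
  qed
qed

lemma card_UN_le_mult:
  assumes "finite I" "card I \<le> n" "\<And>i. i \<in> I \<Longrightarrow> card (A i) \<le> k"
  shows "card (\<Union>i\<in>I. A i) \<le> n * k"
proof -
  have "card (\<Union>i\<in>I. A i) \<le> (\<Sum>i\<in>I. card (A i))"
    using card_UN_le[OF assms(1)] .
  also have "\<dots> \<le> card I * k"
    using sum_bounded_above[of I "\<lambda>i. card (A i)" k] assms(3) by simp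
  also have "\<dots> \<le> n * k"
    using assms(2) by simp
  finally show ?thesis .
qed

context annulus_refinement
begin

lemma vertex_proj_new_vertex:
  assumes "v \<in> V'" "v \<notin> V"
  shows "\<exists>e\<in>E. v \<in> path_image (gam e) \<and> vertex_proj V E gam v \<in> e"
proof -
  obtain e where e: "e \<in> E" "v \<in> path_image (gam e)"
    using refined_vertices_subset assms by blast
  moreover obtain x y where "e = {x, y}"
    by (rule edgeE[OF e(1)])
  ultimately have "\<exists>x. \<exists>e\<in>E. v \<in> path_image (gam e) \<and> x \<in> e"
    by blast
  from someI_ex[OF this] show ?thesis
    using assms(2) by (simp add: vertex_proj_def)
qed

lemma vertex_proj_on_arc:
  assumes "u \<in> V'" "h \<in> E" "u \<in> path_image (gam h)"
  shows "vertex_proj V E gam u \<in> h" "u \<in> h \<union> vInc V' gam h"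
proof -
  have "vertex_proj V E gam u \<in> h \<and> u \<in> h \<union> vInc V' gam h"
  proof (cases "u \<in> V")
    case True
    then show ?thesis
      using arc_inter_vertices[OF assms(2)] assms(3) by (auto simp: vertex_proj_def)
  next
    case False
    then obtain g where g: "g \<in> E" "u \<in> path_image (gam g)" "vertex_proj V E gam u \<in> g"
      using vertex_proj_new_vertex assms(1) by blast
    then have "g = h"
      using edge_eq_if_arcs_share_inner_point assms(2,3) False by blast
    then show ?thesis
      using g assms False edge_subset_vertices[OF assms(2)] by (auto simp: vInc_def)
  qed
  then show "vertex_proj V E gam u \<in> h" "u \<in> h \<union> vInc V' gam h"
    by simp_all
qed

lemma vertex_proj_in_vertices: "v \<in> V' \<Longrightarrow> vertex_proj V E gam v \<in> V"
  using vertex_proj_new_vertex edge_subset_vertices by (cases "v \<in> V") (auto simp: vertex_proj_def)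

text \<open>A vertex on a Jordan curve of the drawing lies on an arc contained in the curve, whose
  ends then lie on the curve as well.\<close>

lemma vertex_proj_on_jordan_curve:
  assumes "simple_path J" "pathfinish J = pathstart J" "path_image J \<subseteq> drawing V E gam"
    and "v \<in> V'" "v \<in> path_image J"
  shows "vertex_proj V E gam v \<in> path_image J"
proof (cases "v \<in> V")
  case False
  then obtain g where "g \<in> E" "v \<in> path_image (gam g)" "vertex_proj V E gam v \<in> g"
    using vertex_proj_new_vertex assms(4) by blast
  then show ?thesis
    using jordan_curve_through_edge_contains_ends[OF assms(1-3)] assms(5) False by blast
qed (use assms in \<open>simp add: vertex_proj_def\<close>)

lemma refined_edgeE:
  assumes "{u, v} \<in> E'"
  obtains C a b c where "C \<in> cells V E gam J1 J2" "path_image (gam' {u, v}) \<subseteq> closure C"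
    "a \<noteq> b" "b \<noteq> c" "a \<noteq> c" "{a, b} \<in> E" "{b, c} \<in> E" "{a, c} \<in> E"
    "frontier C = path_image (gam {a, b}) \<union> path_image (gam {b, c}) \<union> path_image (gam {a, c})"
    "u \<in> frontier C" "v \<in> frontier C"
proof -
  obtain C where C: "C \<in> cells V E gam J1 J2" "path_image (gam' {u, v}) \<subseteq> closure C"
    using refined_edge_in_cell[OF assms] by blast
  obtain a b c where abc: "a \<noteq> b" "b \<noteq> c" "a \<noteq> c" "{a, b} \<in> E" "{b, c} \<in> E" "{a, c} \<in> E"
    "frontier C = path_image (gam {a, b}) \<union> path_image (gam {b, c}) \<union> path_image (gam {a, c})"
    by (rule cell_triangleE[OF C(1)])
  have "{u, v} \<subseteq> V'" "{u, v} \<subseteq> path_image (gam' {u, v})"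
    using ref.edge_subset_vertices[OF assms] ref.edge_subset_arc[OF assms] by auto
  then have "u \<in> frontier C" "v \<in> frontier C"
    using closure_cell_inter_drawing[OF C(1)] C(2) refined_vertices_subset_drawing by blast+
  with C abc show thesis
    by (rule that)
qed

lemma vertex_proj_on_triangle:
  assumes "u \<in> V'" "u \<in> path_image (gam {a, b}) \<union> path_image (gam {b, c}) \<union> path_image (gam {a, c})"
    and "{a, b} \<in> E" "{b, c} \<in> E" "{a, c} \<in> E"
  shows "vertex_proj V E gam u \<in> {a, b, c}"
  using assms vertex_proj_on_arc(1)[OF assms(1)] by blast

lemma vertex_proj_edge:
  assumes "{u, v} \<in> E'" "vertex_proj V E gam u \<noteq> vertex_proj V E gam v"
  shows "{vertex_proj V E gam u, vertex_proj V E gam v} \<in> E"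
proof -
  obtain C a b c where C: "a \<noteq> b" "b \<noteq> c" "a \<noteq> c" "{a, b} \<in> E" "{b, c} \<in> E" "{a, c} \<in> E"
    "frontier C = path_image (gam {a, b}) \<union> path_image (gam {b, c}) \<union> path_image (gam {a, c})"
    "u \<in> frontier C" "v \<in> frontier C"
    by (rule refined_edgeE[OF assms(1)])
  have "u \<in> V'" "v \<in> V'"
    using ref.edge_subset_vertices[OF assms(1)] by auto
  then have "vertex_proj V E gam u \<in> {a, b, c}" "vertex_proj V E gam v \<in> {a, b, c}"
    using vertex_proj_on_triangle C by auto
  then show ?thesis
    using C(4-6) assms(2) by (auto simp: insert_commute)
qed

lemma card_edge_and_vInc_le:
  assumes "weakly_bounded b E gam E' gam'" "h \<in> E"
  shows "finite (h \<union> vInc V' gam h)" "card (h \<union> vInc V' gam h) \<le> 2 + 2 * b"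
proof -
  have fin: "finite (eInc E' gam' gam h)"
    using finite_subset[OF eInc_subset ref.finite_edges] .
  have card2: "card e' = 2" if "e' \<in> eInc E' gam' gam h" for e'
    using that eInc_subset ref.card_edge by blast
  then have fin_U: "finite (\<Union> (eInc E' gam' gam h))"
    using fin by (intro finite_Union) (simp_all add: card_ge_0_finite)
  have "card (\<Union> (eInc E' gam' gam h)) \<le> (\<Sum>e'\<in>eInc E' gam' gam h. card e')"
    using card_Union_le_sum_card .
  also have "\<dots> = 2 * card (eInc E' gam' gam h)"
    using card2 by simp
  also have "\<dots> \<le> 2 * b"
    using assms by (simp add: weakly_bounded_def)
  finally have card_U: "card (\<Union> (eInc E' gam' gam h)) \<le> 2 * b" .
  have sub: "vInc V' gam h \<subseteq> \<Union> (eInc E' gam' gam h)"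
    using vInc_subset_eInc[OF assms(2)] .
  have "finite (vInc V' gam h)" "card (vInc V' gam h) \<le> 2 * b"
    using finite_subset[OF sub fin_U] card_mono[OF fin_U sub] card_U by simp_all
  moreover have "finite h" "card h = 2"
    using card_edge[OF assms(2)] by (simp_all add: card_ge_0_finite)
  ultimately show "finite (h \<union> vInc V' gam h)" "card (h \<union> vInc V' gam h) \<le> 2 + 2 * b"
    using card_Un_le[of h "vInc V' gam h"] by simp_all
qed

definition adj_edges :: "complex set \<Rightarrow> complex \<Rightarrow> complex set \<Rightarrow> complex set set" where
  "adj_edges h u C = {e' \<in> eIncAdj V E gam J1 J2 V' E' gam' h. u \<in> e' \<and> path_image (gam' e') \<subseteq> closure C}"

lemma refined_edge_over_edgeE:
  assumes e': "{u, v} \<in> E'" "vertex_proj V E gam ` {u, v} = {x, y}" and xy: "x \<noteq> y"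
  obtains C h where "C \<in> cells_at x y" "h \<in> E" "path_image (gam h) \<subseteq> frontier C"
    "u \<in> h \<union> vInc V' gam h" "path_image (gam' {u, v}) \<subseteq> closure C"
proof -
  obtain C a b c where C: "C \<in> cells V E gam J1 J2" "path_image (gam' {u, v}) \<subseteq> closure C"
    "a \<noteq> b" "b \<noteq> c" "a \<noteq> c" "{a, b} \<in> E" "{b, c} \<in> E" "{a, c} \<in> E"
    "frontier C = path_image (gam {a, b}) \<union> path_image (gam {b, c}) \<union> path_image (gam {a, c})"
    "u \<in> frontier C" "v \<in> frontier C"
    by (rule refined_edgeE[OF e'(1)])
  have uv: "u \<in> V'" "v \<in> V'"
    using ref.edge_subset_vertices[OF e'(1)] by auto
  then have "vertex_proj V E gam u \<in> {a, b, c}" "vertex_proj V E gam v \<in> {a, b, c}"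
    using vertex_proj_on_triangle C(6-11) by auto
  then have "x \<in> {a, b, c}" "y \<in> {a, b, c}"
    using e'(2) by auto
  then obtain z where "z \<noteq> x" "z \<noteq> y" "{x, z} \<in> E" "{y, z} \<in> E"
    "path_image (gam {a, b}) \<union> path_image (gam {b, c}) \<union> path_image (gam {a, c}) =
     path_image (gam {x, y}) \<union> path_image (gam {y, z}) \<union> path_image (gam {x, z})"
    by (rule triangle_relabel[OF C(3-8) _ _ xy])
  then have "C \<in> cells_at x y"
    unfolding cells_at_def using C(1,9) by auto
  moreover obtain h where h: "h \<in> {{a, b}, {b, c}, {a, c}}" "u \<in> path_image (gam h)"
    using C(9,10) by blast
  moreover have hE: "h \<in> E"
    using h(1) C(6-8) by blast
  moreover have "path_image (gam h) \<subseteq> frontier C"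
    using h(1) C(9) by blast
  moreover have "u \<in> h \<union> vInc V' gam h"
    using vertex_proj_on_arc(2)[OF uv(1) hE h(2)] .
  ultimately show thesis
    using that C(2) by blast
qed

lemma proj_preimage_subset:
  assumes "x \<noteq> y"
  shows "{e' \<in> E'. vertex_proj V E gam ` e' = {x, y}} \<subseteq>
    (\<Union>C\<in>cells_at x y. \<Union>h\<in>{h \<in> E. path_image (gam h) \<subseteq> frontier C}. \<Union>u\<in>h \<union> vInc V' gam h. adj_edges h u C)"
proof
  fix e'
  assume e': "e' \<in> {e' \<in> E'. vertex_proj V E gam ` e' = {x, y}}"
  then have "e' \<in> E'"
    by simp
  then obtain u v where uv: "e' = {u, v}"
    by (rule ref.edgeE)
  obtain C h where C: "C \<in> cells_at x y" "h \<in> E" "path_image (gam h) \<subseteq> frontier C"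
      "u \<in> h \<union> vInc V' gam h" "path_image (gam' {u, v}) \<subseteq> closure C"
    using refined_edge_over_edgeE[of u v x y] e' uv assms by auto
  then have "e' \<in> adj_edges h u C"
    unfolding adj_edges_def eIncAdj_def cells_at_def using e' uv by blast
  with C(1-4) show "e' \<in> (\<Union>C\<in>cells_at x y. \<Union>h\<in>{h \<in> E. path_image (gam h) \<subseteq> frontier C}.
      \<Union>u\<in>h \<union> vInc V' gam h. adj_edges h u C)"
    by blast
qed

lemma card_proj_preimage_le:
  assumes SB: "strongly_bounded b c V E gam J1 J2 V' E' gam'" and F: "F \<in> E"
  shows "card {e' \<in> E'. vertex_proj V E gam ` e' = F} \<le> 2 * (3 * ((2 + 2 * b) * c))"
proof -
  obtain x y where xy: "F = {x, y}" "x \<noteq> y"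
    by (rule edgeE[OF F])
  have WB: "weakly_bounded b E gam E' gam'"
    using SB by (simp add: strongly_bounded_def)
  have adj: "card (adj_edges h u C) \<le> c"
    if "h \<in> E" "u \<in> h \<union> vInc V' gam h" "C \<in> cells V E gam J1 J2" for h u C
    using SB that unfolding strongly_bounded_def adj_edges_def by blast
  let ?U = "\<Union>C\<in>cells_at x y. \<Union>h\<in>{h \<in> E. path_image (gam h) \<subseteq> frontier C}.
    \<Union>u\<in>h \<union> vInc V' gam h. adj_edges h u C"
  have card_U: "card ?U \<le> 2 * (3 * ((2 + 2 * b) * c))"
  proof (rule card_UN_le_mult)
    show "finite (cells_at x y)" "card (cells_at x y) \<le> 2"
      using card_cells_at_le_2 F xy by auto
  next
    fix C
    assume "C \<in> cells_at x y"
    then have C: "C \<in> cells V E gam J1 J2"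
      unfolding cells_at_def by blast
    show "card (\<Union>h\<in>{h \<in> E. path_image (gam h) \<subseteq> frontier C}. \<Union>u\<in>h \<union> vInc V' gam h. adj_edges h u C)
      \<le> 3 * ((2 + 2 * b) * c)"
      using card_frontier_edges_le_3[OF C] card_edge_and_vInc_le[OF WB] adj[OF _ _ C]
      by (intro card_UN_le_mult) auto
  qed
  have "?U \<subseteq> E'"
    unfolding adj_edges_def eIncAdj_def by blast
  then have "finite ?U"
    using ref.finite_edges by (rule finite_subset)
  moreover have "{e' \<in> E'. vertex_proj V E gam ` e' = F} \<subseteq> ?U"
    using proj_preimage_subset[OF xy(2)] xy(1) by simp
  ultimately have "card {e' \<in> E'. vertex_proj V E gam ` e' = F} \<le> card ?U"
    by (rule card_mono)
  with card_U show ?thesis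
    by linarith
qed

lemma crossing_len_le_pullback:
  assumes nonneg: "\<forall>e\<in>E. 0 \<le> m e"
  shows "crossing_len E (V \<inter> path_image J1) (V \<inter> path_image J2) m
    \<le> crossing_len E' (V' \<inter> path_image J1) (V' \<inter> path_image J2)
        (\<lambda>e'. if vertex_proj V E gam ` e' \<in> E then m (vertex_proj V E gam ` e') else 0)"
proof (rule le_crossing_len[OF crossing_walks_nonempty(2)])
  let ?p = "vertex_proj V E gam"
  fix ws
  assume "ws \<in> crossing_walks E' (V' \<inter> path_image J1) (V' \<inter> path_image J2)"
  then have ws: "walk E' ws" "hd ws \<in> V' \<inter> path_image J1" "last ws \<in> V' \<inter> path_image J2"
    by (auto simp: crossing_walks_def)
  then have "ws \<noteq> []"
    by auto
  then have "hd (proj_walk ?p ws) = ?p (hd ws)" "last (proj_walk ?p ws) = ?p (last ws)"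
    by (rule hd_proj_walk, rule last_proj_walk)
  moreover have "walk E (proj_walk ?p ws)"
    using ws(1) vertex_proj_edge by (rule walk_proj_walk)
  ultimately have "proj_walk ?p ws \<in> crossing_walks E (V \<inter> path_image J1) (V \<inter> path_image J2)"
    using ws(2,3) vertex_proj_in_vertices jordan_boundaries boundaries_subset_drawing
      vertex_proj_on_jordan_curve by (auto simp: crossing_walks_def)
  then have "crossing_len E (V \<inter> path_image J1) (V \<inter> path_image J2) m \<le> walk_len m (proj_walk ?p ws)"
    using crossing_len_le nonneg by blast
  also have "\<dots> \<le> walk_len (\<lambda>e'. if ?p ` e' \<in> E then m (?p ` e') else 0) ws"
    using ws(1) vertex_proj_edge by (intro walk_len_proj_walk_le) (auto simp: nonneg)
  finally show "crossing_len E (V \<inter> path_image J1) (V \<inter> path_image J2) m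
      \<le> walk_len (\<lambda>e'. if ?p ` e' \<in> E then m (?p ` e') else 0) ws" .
qed

theorem EEL_le_refinement:
  assumes SB: "strongly_bounded b c V E gam J1 J2 V' E' gam'"
  shows "EEL E (V \<inter> path_image J1) (V \<inter> path_image J2)
    \<le> real (2 * (3 * ((2 + 2 * b) * c))) * EEL E' (V' \<inter> path_image J1) (V' \<inter> path_image J2)"
proof (rule EEL_le_by_transfer[OF finite_edges edges_nonempty crossing_walks_nonempty(1)
      ref.finite_edges refined_edges_nonempty crossing_walks_nonempty(2)])
  fix m
  assume "admissible E m"
  then have nonneg: "\<forall>e\<in>E. 0 \<le> m e"
    by (simp add: admissible_def)
  let ?m' = "\<lambda>e'. if vertex_proj V E gam ` e' \<in> E then m (vertex_proj V E gam ` e') else 0"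
  have "\<forall>e\<in>E'. 0 \<le> ?m' e"
    using nonneg by simp
  moreover have "metric_area E' ?m' \<le> real (2 * (3 * ((2 + 2 * b) * c))) * metric_area E m"
    using card_proj_preimage_le[OF SB] by (intro metric_area_pull_le finite_edges ref.finite_edges) auto
  ultimately show "\<exists>mt. (\<forall>e\<in>E'. 0 \<le> mt e) \<and>
      metric_area E' mt \<le> real (2 * (3 * ((2 + 2 * b) * c))) * metric_area E m \<and>
      crossing_len E (V \<inter> path_image J1) (V \<inter> path_image J2) m
        \<le> crossing_len E' (V' \<inter> path_image J1) (V' \<inter> path_image J2) mt"
    using crossing_len_le_pullback[OF nonneg] by (intro exI[of _ ?m']) blast
qed simp

end

context annulus_refinement
begin

theorem EEL_refinement_comparable:
  assumes "strongly_bounded b c V E gam J1 J2 V' E' gam'"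
    and "real b \<le> k" "real (2 * (3 * ((2 + 2 * b) * c))) \<le> k"
  shows "EEL E' (V' \<inter> path_image J1) (V' \<inter> path_image J2) \<le> k * EEL E (V \<inter> path_image J1) (V \<inter> path_image J2)"
    "EEL E (V \<inter> path_image J1) (V \<inter> path_image J2) \<le> k * EEL E' (V' \<inter> path_image J1) (V' \<inter> path_image J2)"
proof -
  have "0 \<le> EEL E (V \<inter> path_image J1) (V \<inter> path_image J2)"
    by (rule EEL_nonneg[OF finite_edges edges_nonempty crossing_walks_nonempty(1)])
  moreover have "0 \<le> EEL E' (V' \<inter> path_image J1) (V' \<inter> path_image J2)"
    by (rule EEL_nonneg[OF ref.finite_edges refined_edges_nonempty crossing_walks_nonempty(2)])
  moreover have "weakly_bounded b E gam E' gam'"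
    using assms(1) by (simp add: strongly_bounded_def)
  ultimately show "EEL E' (V' \<inter> path_image J1) (V' \<inter> path_image J2) \<le> k * EEL E (V \<inter> path_image J1) (V \<inter> path_image J2)"
    "EEL E (V \<inter> path_image J1) (V \<inter> path_image J2) \<le> k * EEL E' (V' \<inter> path_image J1) (V' \<inter> path_image J2)"
    using EEL_refinement_le EEL_le_refinement[OF assms(1)] assms(2,3)
    by (meson mult_right_mono order_trans)+
qed

end

theorem mainTheorem3:
  fixes b c :: nat
  shows "\<exists>k::real. k \<ge> 1 \<and>
    (\<forall>V E gam J1 J2 V' E' gam'.
       comb_annulus V E gam J1 J2 \<and>
       ann_refinement V E gam J1 J2 V' E' gam' \<and>
       strongly_bounded b c V E gam J1 J2 V' E' gam' \<longrightarrow>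
         EEL E' (V' \<inter> path_image J1) (V' \<inter> path_image J2) / k
           \<le> EEL E (V \<inter> path_image J1) (V \<inter> path_image J2) \<and>
         EEL E (V \<inter> path_image J1) (V \<inter> path_image J2)
           \<le> k * EEL E' (V' \<inter> path_image J1) (V' \<inter> path_image J2))"
proof -
  define k :: real where "k = real b + real (2 * (3 * ((2 + 2 * b) * c))) + 1"
  have k: "1 \<le> k" "real b \<le> k" "real (2 * (3 * ((2 + 2 * b) * c))) \<le> k"
    unfolding k_def by simp_all
  then have k_pos: "0 < k"
    by linarith
  have "EEL E' (V' \<inter> path_image J1) (V' \<inter> path_image J2) / k \<le> EEL E (V \<inter> path_image J1) (V \<inter> path_image J2) \<and>
      EEL E (V \<inter> path_image J1) (V \<inter> path_image J2) \<le> k * EEL E' (V' \<inter> path_image J1) (V' \<inter> path_image J2)"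
    if "comb_annulus V E gam J1 J2" "ann_refinement V E gam J1 J2 V' E' gam'"
      "strongly_bounded b c V E gam J1 J2 V' E' gam'" for V E gam J1 J2 V' E' gam'
  proof -
    interpret annulus_refinement V E gam J1 J2 V' E' gam'
      using that by unfold_locales (simp_all add: comb_annulus_def)
    show ?thesis
      using EEL_refinement_comparable[OF that(3) k(2,3)] k_pos by (simp add: pos_divide_le_eq mult.commute)
  qed
  with k(1) show ?thesis
    by blast
qed

end
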